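(* Let $G$ be a 3-connected cubic near-bipartite graph with removable doubleton $\{e_1,e_2\}$, let $H=G-\{e_1,e_2\}$ have bipartition $(U,W)$ with both ends of $e_1$ in $U$ (and hence both ends of $e_2$ in $W$), and let $\partial(X)$ be a nontrivial 3-cut of $G$. Then $|X|$ is odd and both $G/X$ and $G/\overline{X}$ are 3-connected cubic graphs. Moreover, if $|X\cap U|\ge |X\cap W|$, then: (i) $|X\cap U|=|X\cap W|+1$; (ii) $\partial(X)$ is a good cut of $G$ if and only if both ends of $e_1$ lie in $X\cap U$, both ends of $e_2$ lie in $\overline{X}\cap W$, $|E_G[X\cap U,\overline{X}\cap W]|=2$, and $E_G[X\cap W,\overline{X}\cap U]$ consists of exactly one edge $zw$ with $w\in X\cap W$. In this case $zw$ is nonremovable in $G$, $G/\overline{X}$ (with contracted vertex $\overline{x}$) is near-bipartite with removable doubleton $\{e_1,w\overline{x}\}$, and $G/X$ (with contracted vertex $x$) is near-bipartite with removable doubleton $\{e_2,zx\}$.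
   Context: Graphs may have multiple edges but no loops. An edge is admissible if it lies in some perfect matching; a connected graph with at least two vertices is matching covered if every edge is admissible; an edge $e$ of a matching covered graph $G$ is removable if $G-e$ is matching covered. A nonbipartite matching covered graph $G$ is near-bipartite if it has a pair of edges $\{e_1,e_2\}$ (a removable doubleton) such that $G-\{e_1,e_2\}$ is bipartite matching covered. For $X\subseteq V(G)$, $\overline{X}=V(G)\setminus X$, $\partial(X)$ is the set of edges with one end in $X$ and one in $\overline{X}$; it is a $k$-cut if $|\partial(X)|=k$, and nontrivial if $|X|\ge2$ and $|\overline{X}|\ge 2$. $G/X$ is the graph obtained by contracting $X$ to a single vertex $x$ (removing edges inside $X$); $G/\overline{X}$ similarly with contracted vertex $\overline{x}$. $E_G[Y,Z]$ is the set of edges with one end in $Y$ and the other in $Z$. For a matching covered $G$, a cut $C=\partial(X)$ is tight if $|M\cap C|=1$ for every perfect matching $M$ of $G$, separating if both $G/X$ and $G/\overline{X}$ are matching covered, and good if it is separating but not tight. *)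

theory Defs
  imports Main
begin

text \<open>Finite multigraphs without loops: vertex set, edge identifiers, and an
  endpoint map sending each edge to its 2-element set of ends.\<close>

record ('v, 'e) mgraph =
  verts :: "'v set"
  edges :: "'e set"
  endpts :: "'e \<Rightarrow> 'v set"

definition wf_graph :: "('v, 'e) mgraph \<Rightarrow> bool" where
  "wf_graph G \<longleftrightarrow> finite (verts G) \<and> finite (edges G) \<and>
     (\<forall>e\<in>edges G. endpts G e \<subseteq> verts G \<and> card (endpts G e) = 2)"

definition adj_rel :: "('v, 'e) mgraph \<Rightarrow> ('v \<times> 'v) set" where
  "adj_rel G = {(u, v). \<exists>e\<in>edges G. endpts G e = {u, v}}"

definition connected_graph :: "('v, 'e) mgraph \<Rightarrow> bool" where
  "connected_graph G \<longleftrightarrow> verts G \<noteq> {} \<and>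
     (\<forall>u\<in>verts G. \<forall>v\<in>verts G. (u, v) \<in> (adj_rel G)\<^sup>*)"

definition del_edges :: "('v, 'e) mgraph \<Rightarrow> 'e set \<Rightarrow> ('v, 'e) mgraph" where
  "del_edges G F = G\<lparr>edges := edges G - F\<rparr>"

definition del_verts :: "('v, 'e) mgraph \<Rightarrow> 'v set \<Rightarrow> ('v, 'e) mgraph" where
  "del_verts G S = G\<lparr>verts := verts G - S,
      edges := {e \<in> edges G. endpts G e \<inter> S = {}}\<rparr>"

definition degree :: "('v, 'e) mgraph \<Rightarrow> 'v \<Rightarrow> nat" where
  "degree G v = card {e \<in> edges G. v \<in> endpts G e}"

definition cubic :: "('v, 'e) mgraph \<Rightarrow> bool" where
  "cubic G \<longleftrightarrow> wf_graph G \<and> (\<forall>v\<in>verts G. degree G v = 3)"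

definition k_connected :: "nat \<Rightarrow> ('v, 'e) mgraph \<Rightarrow> bool" where
  "k_connected k G \<longleftrightarrow> wf_graph G \<and> card (verts G) > k \<and>
     (\<forall>S. S \<subseteq> verts G \<and> card S < k \<longrightarrow> connected_graph (del_verts G S))"

definition perfect_matching :: "('v, 'e) mgraph \<Rightarrow> 'e set \<Rightarrow> bool" where
  "perfect_matching G M \<longleftrightarrow> M \<subseteq> edges G \<and>
     (\<forall>v\<in>verts G. \<exists>!e. e \<in> M \<and> v \<in> endpts G e)"

definition admissible :: "('v, 'e) mgraph \<Rightarrow> 'e \<Rightarrow> bool" where
  "admissible G e \<longleftrightarrow> (\<exists>M. perfect_matching G M \<and> e \<in> M)"

definition matching_covered :: "('v, 'e) mgraph \<Rightarrow> bool" where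
  "matching_covered G \<longleftrightarrow> wf_graph G \<and> connected_graph G \<and> card (verts G) \<ge> 2 \<and>
     (\<forall>e\<in>edges G. admissible G e)"

definition removable :: "('v, 'e) mgraph \<Rightarrow> 'e \<Rightarrow> bool" where
  "removable G e \<longleftrightarrow> e \<in> edges G \<and> matching_covered (del_edges G {e})"

definition bipartition :: "('v, 'e) mgraph \<Rightarrow> 'v set \<Rightarrow> 'v set \<Rightarrow> bool" where
  "bipartition G U W \<longleftrightarrow> U \<inter> W = {} \<and> U \<union> W = verts G \<and>
     (\<forall>e\<in>edges G. \<exists>u\<in>U. \<exists>w\<in>W. endpts G e = {u, w})"

definition bipartite :: "('v, 'e) mgraph \<Rightarrow> bool" where
  "bipartite G \<longleftrightarrow> (\<exists>U W. bipartition G U W)"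

definition near_bipartite_rd :: "('v, 'e) mgraph \<Rightarrow> 'e \<Rightarrow> 'e \<Rightarrow> bool" where
  "near_bipartite_rd G e1 e2 \<longleftrightarrow> matching_covered G \<and> \<not> bipartite G \<and>
     e1 \<in> edges G \<and> e2 \<in> edges G \<and> e1 \<noteq> e2 \<and>
     bipartite (del_edges G {e1, e2}) \<and> matching_covered (del_edges G {e1, e2})"

definition cut :: "('v, 'e) mgraph \<Rightarrow> 'v set \<Rightarrow> 'e set" where
  "cut G X = {e \<in> edges G. card (endpts G e \<inter> X) = 1}"

definition edges_between :: "('v, 'e) mgraph \<Rightarrow> 'v set \<Rightarrow> 'v set \<Rightarrow> 'e set" where
  "edges_between G Y Z = {e \<in> edges G. \<exists>y\<in>Y. \<exists>z\<in>Z. endpts G e = {y, z}}"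

text \<open>Contraction G/X: X is shrunk to the single new vertex None; the other
  vertices v become Some v; edges inside X are removed; edge identities kept.\<close>
definition contract :: "('v, 'e) mgraph \<Rightarrow> 'v set \<Rightarrow> ('v option, 'e) mgraph" where
  "contract G X = \<lparr> verts = insert None (Some ` (verts G - X)),
     edges = {e \<in> edges G. \<not> endpts G e \<subseteq> X},
     endpts = (\<lambda>e. (\<lambda>v. if v \<in> X then None else Some v) ` endpts G e) \<rparr>"

definition tight_cut :: "('v, 'e) mgraph \<Rightarrow> 'v set \<Rightarrow> bool" where
  "tight_cut G X \<longleftrightarrow> (\<forall>M. perfect_matching G M \<longrightarrow> card (M \<inter> cut G X) = 1)"

definition separating_cut :: "('v, 'e) mgraph \<Rightarrow> 'v set \<Rightarrow> bool" where
  "separating_cut G X \<longleftrightarrow> matching_covered (contract G X) \<and>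
     matching_covered (contract G (verts G - X))"

definition good_cut :: "('v, 'e) mgraph \<Rightarrow> 'v set \<Rightarrow> bool" where
  "good_cut G X \<longleftrightarrow> separating_cut G X \<and> \<not> tight_cut G X"

end

(*
  Counting ends of edges: in a cubic graph 3 |X| = 2 |E(X)| + |d(X)|, so both shores of a 3-cut
  are odd, and contracting a shore of a 3-cut keeps the graph cubic.  Since a 3-connected graph
  is 3-edge-connected, a separation of a contraction by at most two vertices would give a
  separation of G, so both contractions stay 3-connected.

  For the rest, weigh each edge by its number of ends in X /\ U minus its number of ends in
  X /\ W.  Every edge other than e1, e2 joins U to W, so it weighs +1 if it goes from X /\ U to
  the complement of X in W, -1 if it goes from X /\ W to the complement of X in U, and 0
  otherwise; e1 weighs its number of ends in X, and e2 minus its number of ends in X.  The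
  total weight is 3 (|X /\ U| - |X /\ W|), which together with |d(X)| = 3 forces
  |X /\ U| = |X /\ W| + 1.  The weight of a perfect matching is then 1, and this shows that
  every perfect matching meets d(X) exactly once unless e1 lies inside X and e2 outside X.  In
  that case there are two edges from X /\ U to the complement of X in W and a single edge zw
  from X /\ W to the complement in U; a perfect matching of G - {e1, e2} through zw crosses d(X)
  three times, while no perfect matching avoiding zw contains e1.

  The two contractions are near-bipartite by a Hall-type criterion: a 3-connected cubic graph
  with edges e1 inside P and e2 inside Q, whose deletion leaves a bipartite graph with colour
  classes P, Q of equal size, is near-bipartite with removable doubleton {e1, e2}, because a
  set violating Hall's condition would be surrounded by a cut of fewer than three edges.
*)

theory Submission
  imports Defs
begin

section \<open>Graphs, cuts and counting ends\<close>

lemma wf_graphD: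
  assumes "wf_graph G"
  shows "finite (verts G)" "finite (edges G)"
    and "e \<in> edges G \<Longrightarrow> endpts G e \<subseteq> verts G"
    and "e \<in> edges G \<Longrightarrow> card (endpts G e) = 2"
  using assms by (simp_all add: wf_graph_def)

lemma wf_graph_endptsE:
  assumes "wf_graph G" "e \<in> edges G"
  obtains u v where "endpts G e = {u, v}" "u \<noteq> v" "u \<in> verts G" "v \<in> verts G"
  using wf_graphD(3,4)[OF assms] by (metis card_2_iff insert_subset)

lemma card_endpts_Int_le_2:
  assumes "wf_graph G" "e \<in> edges G"
  shows "card (endpts G e \<inter> Y) \<le> 2"
  using assms
  by (metis card_mono finite_Int inf_le1 card_gt_0_iff wf_graphD(4) zero_less_numeral
      linorder_not_le less_imp_le)

lemma cubic_wf_graph: "cubic G \<Longrightarrow> wf_graph G"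
  by (simp add: cubic_def)

lemma k_connected_wf_graph: "k_connected k G \<Longrightarrow> wf_graph G"
  by (simp add: k_connected_def)

lemma del_verts_simps [simp]:
  "verts (del_verts G S) = verts G - S"
  "edges (del_verts G S) = {e \<in> edges G. endpts G e \<inter> S = {}}"
  "endpts (del_verts G S) = endpts G"
  by (simp_all add: del_verts_def)

lemma del_edges_simps [simp]:
  "verts (del_edges G F) = verts G"
  "edges (del_edges G F) = edges G - F"
  "endpts (del_edges G F) = endpts G"
  by (simp_all add: del_edges_def)

lemma wf_graph_del_edges: "wf_graph G \<Longrightarrow> wf_graph (del_edges G F)"
  by (auto simp: wf_graph_def)

lemma sum_card_endpts_Int:
  assumes "finite E" "finite Y"
  shows "(\<Sum>e\<in>E. card (endpts G e \<inter> Y)) = (\<Sum>v\<in>Y. card {e\<in>E. v \<in> endpts G e})"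
proof -
  have by_edges: "card {e\<in>E. v \<in> endpts G e} = (\<Sum>e\<in>E. if v \<in> endpts G e then 1 else 0)" for v
    using assms(1) by (simp add: sum.If_cases Int_def conj_commute)
  have by_verts: "card (endpts G e \<inter> Y) = (\<Sum>v\<in>Y. if v \<in> endpts G e then 1 else 0)" for e
  proof -
    have "endpts G e \<inter> Y = {v\<in>Y. v \<in> endpts G e}" by blast
    then show ?thesis using assms(2) by (simp add: sum.If_cases Int_def)
  qed
  show ?thesis unfolding by_edges by_verts by (rule sum.swap)
qed

lemma cubic_sum_card_endpts_Int:
  assumes "cubic G" "Y \<subseteq> verts G"
  shows "(\<Sum>e\<in>edges G. card (endpts G e \<inter> Y)) = 3 * card Y"
proof -
  have wf: "wf_graph G" using assms(1) by (rule cubic_wf_graph)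
  have "finite Y" using assms(2) wf_graphD(1)[OF wf] by (rule finite_subset)
  then have "(\<Sum>e\<in>edges G. card (endpts G e \<inter> Y)) = (\<Sum>v\<in>Y. degree G v)"
    by (simp add: sum_card_endpts_Int wf_graphD(2)[OF wf] degree_def)
  also have "\<dots> = (\<Sum>v\<in>Y. 3)"
    using assms by (intro sum.cong) (auto simp: cubic_def)
  finally show ?thesis by simp
qed

lemma perfect_matching_sum_card_endpts_Int:
  assumes "wf_graph G" "perfect_matching G M" "Y \<subseteq> verts G"
  shows "(\<Sum>e\<in>M. card (endpts G e \<inter> Y)) = card Y"
proof -
  have "finite M"
    using assms(1,2) wf_graphD(2) finite_subset unfolding perfect_matching_def by blast
  moreover have "finite Y" using assms(3) wf_graphD(1)[OF assms(1)] by (rule finite_subset)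
  ultimately have "(\<Sum>e\<in>M. card (endpts G e \<inter> Y)) = (\<Sum>v\<in>Y. card {e\<in>M. v \<in> endpts G e})"
    by (rule sum_card_endpts_Int)
  also have "\<dots> = (\<Sum>v\<in>Y. 1)"
  proof (intro sum.cong refl)
    fix v assume "v \<in> Y"
    then obtain e where "{e\<in>M. v \<in> endpts G e} = {e}"
      using assms(2,3) unfolding perfect_matching_def by blast
    then show "card {e\<in>M. v \<in> endpts G e} = 1" by simp
  qed
  finally show ?thesis by simp
qed

lemma perfect_matching_sum_card_diff:
  assumes "wf_graph G" "perfect_matching G M" "Y1 \<subseteq> verts G" "Y2 \<subseteq> verts G"
  shows "(\<Sum>e\<in>M. int (card (endpts G e \<inter> Y1)) - int (card (endpts G e \<inter> Y2))) =
    int (card Y1) - int (card Y2)"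
  using perfect_matching_sum_card_endpts_Int[OF assms(1,2,3)]
    perfect_matching_sum_card_endpts_Int[OF assms(1,2,4)]
  by (simp add: sum_subtractf flip: of_nat_sum)

lemma cubic_sum_card_diff:
  assumes "cubic G" "Y1 \<subseteq> verts G" "Y2 \<subseteq> verts G"
  shows "(\<Sum>e\<in>edges G. int (card (endpts G e \<inter> Y1)) - int (card (endpts G e \<inter> Y2))) =
    3 * int (card Y1) - 3 * int (card Y2)"
  using cubic_sum_card_endpts_Int[OF assms(1,2)] cubic_sum_card_endpts_Int[OF assms(1,3)]
  by (simp add: sum_subtractf flip: of_nat_sum)

lemma sum_split_pair:
  assumes "finite B" "a \<noteq> b"
  shows "(\<Sum>e\<in>B. f e) =
    (if a \<in> B then f a else 0) + (if b \<in> B then f b else 0) + (\<Sum>e\<in>B - {a, b}. f e)"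
proof -
  have "(\<Sum>e\<in>B. f e) = (\<Sum>e\<in>B \<inter> {a, b}. f e) + (\<Sum>e\<in>B - {a, b}. f e)"
    using assms(1) by (metis sum.Int_Diff)
  moreover have "(\<Sum>e\<in>B \<inter> {a, b}. f e) = (if a \<in> B then f a else 0) + (if b \<in> B then f b else 0)"
    using assms(2) by (cases "a \<in> B"; cases "b \<in> B") (auto simp: Int_insert_right)
  ultimately show ?thesis by simp
qed

lemma sum_indicator_card:
  assumes "finite B" "C \<subseteq> B"
  shows "(\<Sum>e\<in>B. if e \<in> C then 1 else 0 :: int) = int (card C)"
proof -
  have "(\<Sum>e\<in>B. if e \<in> C then 1 else 0 :: int) = (\<Sum>e\<in>B \<inter> C. 1)"
    using assms(1) by (simp add: sum.If_cases Int_def)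
  also have "B \<inter> C = C" using assms(2) by blast
  finally show ?thesis by simp
qed

lemma cut_subset_edges: "cut G Y \<subseteq> edges G"
  by (auto simp: cut_def)

lemma finite_cut: "wf_graph G \<Longrightarrow> finite (cut G Y)"
  by (rule finite_subset[OF cut_subset_edges wf_graphD(2)])

lemma cutI:
  assumes "wf_graph G" "e \<in> edges G" "endpts G e \<inter> Y \<noteq> {}" "\<not> endpts G e \<subseteq> Y"
  shows "e \<in> cut G Y"
proof -
  obtain u v where "endpts G e = {u, v}" "u \<noteq> v"
    using wf_graph_endptsE[OF assms(1,2)] by blast
  then show ?thesis
    using assms(2-4) unfolding cut_def
    by (cases "u \<in> Y"; cases "v \<in> Y") (auto simp: Int_insert_left)
qed

lemma cut_edgeE:
  assumes "wf_graph G" "e \<in> cut G Y"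
  obtains y t where "endpts G e = {y, t}" "y \<in> Y" "t \<notin> Y" "y \<in> verts G" "t \<in> verts G"
proof -
  have e: "e \<in> edges G" "card (endpts G e \<inter> Y) = 1" using assms(2) by (auto simp: cut_def)
  obtain u v where uv: "endpts G e = {u, v}" "u \<noteq> v" "u \<in> verts G" "v \<in> verts G"
    using wf_graph_endptsE[OF assms(1) e(1)] by blast
  show ?thesis
  proof (cases "u \<in> Y")
    case True
    then have "v \<notin> Y" using e(2) uv by (auto simp: Int_insert_left)
    then show ?thesis using that[of u v] True uv by auto
  next
    case False
    then have "v \<in> Y" using e(2) uv by (cases "v \<in> Y") (auto simp: Int_insert_left)
    then show ?thesis using that[of v u] False uv by (auto simp: insert_commute)
  qed
qed

lemma cut_Diff_verts:
  assumes "wf_graph G"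
  shows "cut G (verts G - Y) = cut G Y"
proof -
  have "card (endpts G e \<inter> (verts G - Y)) = 1 \<longleftrightarrow> card (endpts G e \<inter> Y) = 1"
    if e: "e \<in> edges G" for e
  proof -
    obtain u v where "endpts G e = {u, v}" "u \<noteq> v" "u \<in> verts G" "v \<in> verts G"
      using wf_graph_endptsE[OF assms e] by blast
    then show ?thesis by (cases "u \<in> Y"; cases "v \<in> Y") (auto simp: Int_insert_left)
  qed
  then show ?thesis unfolding cut_def by auto
qed

text \<open>In a cubic graph \<open>3 |Y| = 2 |E(Y)| + |\<partial>(Y)|\<close>.\<close>

lemma cubic_odd_card_cut_iff:
  assumes "cubic G" "Y \<subseteq> verts G"
  shows "odd (card (cut G Y)) \<longleftrightarrow> odd (card Y)"
proof -
  have wf: "wf_graph G" using assms(1) by (rule cubic_wf_graph)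
  let ?inner = "{e\<in>edges G. card (endpts G e \<inter> Y) = 2}"
  have "(\<Sum>e\<in>edges G. card (endpts G e \<inter> Y)) =
      (\<Sum>e\<in>edges G. (if e \<in> ?inner then 2 else 0) + (if e \<in> cut G Y then 1 else 0))"
  proof (intro sum.cong refl)
    fix e assume "e \<in> edges G"
    with card_endpts_Int_le_2[OF wf this, of Y]
    show "card (endpts G e \<inter> Y) = (if e \<in> ?inner then 2 else 0) + (if e \<in> cut G Y then 1 else 0)"
      by (auto simp: cut_def)
  qed
  also have "\<dots> = 2 * card ?inner + card (cut G Y)"
    using wf_graphD(2)[OF wf] by (simp add: sum.distrib sum.If_cases Int_def cut_def)
  finally have "3 * card Y = 2 * card ?inner + card (cut G Y)"
    using cubic_sum_card_endpts_Int[OF assms] by simp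
  then show ?thesis by presburger
qed

section \<open>3-connectivity and small cuts\<close>

lemma adj_rel_sym: "(u, v) \<in> adj_rel G \<Longrightarrow> (v, u) \<in> adj_rel G"
  unfolding adj_rel_def by (auto simp: insert_commute)

lemma rtrancl_adj_rel_sym: "(u, v) \<in> (adj_rel G)\<^sup>* \<Longrightarrow> (v, u) \<in> (adj_rel G)\<^sup>*"
  by (induction rule: rtrancl_induct) (auto intro: converse_rtrancl_into_rtrancl adj_rel_sym)

lemma connected_graphI:
  assumes "r \<in> verts G" "\<And>v. v \<in> verts G \<Longrightarrow> (r, v) \<in> (adj_rel G)\<^sup>*"
  shows "connected_graph G"
  unfolding connected_graph_def using assms rtrancl_adj_rel_sym by (metis empty_iff rtrancl_trans)

lemma connected_graph_closed_set:
  assumes "connected_graph G" "a \<in> A" "a \<in> verts G"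
    and "\<And>e. e \<in> edges G \<Longrightarrow> endpts G e \<inter> A \<noteq> {} \<Longrightarrow> endpts G e \<subseteq> A"
  shows "verts G \<subseteq> A"
proof
  fix v assume "v \<in> verts G"
  then have "(a, v) \<in> (adj_rel G)\<^sup>*" using assms(1,3) unfolding connected_graph_def by blast
  then show "v \<in> A"
  proof (induction rule: rtrancl_induct)
    case (step y z)
    then obtain e where "e \<in> edges G" "endpts G e = {y, z}" unfolding adj_rel_def by blast
    then show ?case using assms(4) step.IH by blast
  qed (fact assms(2))
qed

lemma k_connected_3_connected:
  assumes "k_connected 3 G"
  shows "connected_graph G"
proof -
  have "connected_graph (del_verts G {})" using assms unfolding k_connected_def by simp
  moreover have "del_verts G {} = G" by (simp add: del_verts_def)
  ultimately show ?thesis by simp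
qed

lemma k_connected_3_no_2_separator:
  assumes kc: "k_connected 3 G" and S: "S \<subseteq> verts G" "card S \<le> 2"
    and A: "A \<subseteq> verts G - S" "a \<in> A" and x: "x \<in> verts G - S - A"
    and closed: "\<And>e. e \<in> edges G \<Longrightarrow> endpts G e \<inter> A \<noteq> {} \<Longrightarrow> endpts G e \<subseteq> A \<union> S"
  shows False
proof -
  have "connected_graph (del_verts G S)" using kc S unfolding k_connected_def by auto
  then have "verts (del_verts G S) \<subseteq> A"
    by (rule connected_graph_closed_set) (use A closed in auto)
  then show False using x by auto
qed

lemma card_cut_ends_le:
  assumes "wf_graph G"
  shows "card (\<Union>e\<in>cut G Y. endpts G e \<inter> Y) \<le> card (cut G Y)"
proof -
  have "card (\<Union>e\<in>cut G Y. endpts G e \<inter> Y) \<le> (\<Sum>e\<in>cut G Y. card (endpts G e \<inter> Y))"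
    by (rule card_UN_le[OF finite_cut[OF assms]])
  also have "\<dots> = card (cut G Y)" by (simp add: cut_def)
  finally show ?thesis .
qed

lemma k_connected_3_small_cut_ends:
  assumes kc: "k_connected 3 G" and Y: "Y \<subseteq> verts G" and c2: "card (cut G Y) \<le> 2"
    and x: "x \<in> verts G - Y"
  shows "Y \<subseteq> (\<Union>e\<in>cut G Y. endpts G e \<inter> Y)" (is "_ \<subseteq> ?S")
proof
  fix a assume a: "a \<in> Y"
  have wf: "wf_graph G" using kc by (rule k_connected_wf_graph)
  show "a \<in> ?S"
  proof (rule ccontr)
    assume "a \<notin> ?S"
    show False
    proof (rule k_connected_3_no_2_separator[OF kc, of ?S "Y - ?S" a x])
      show "?S \<subseteq> verts G" "Y - ?S \<subseteq> verts G - ?S" "a \<in> Y - ?S" using Y a \<open>a \<notin> ?S\<close> by auto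
      show "card ?S \<le> 2" using card_cut_ends_le[OF wf, of Y] c2 by simp
      fix e assume e: "e \<in> edges G" "endpts G e \<inter> (Y - ?S) \<noteq> {}"
      then have "e \<notin> cut G Y" by blast
      then show "endpts G e \<subseteq> Y - ?S \<union> ?S" using cutI[OF wf e(1)] e(2) by blast
    qed (use x in auto)
  qed
qed

lemma k_connected_3_small_cut_cards:
  assumes kc: "k_connected 3 G" and Y: "Y \<subseteq> verts G" "Y \<noteq> {}" "verts G - Y \<noteq> {}"
    and c2: "card (cut G Y) \<le> 2"
  shows "card (cut G Y) = 2 \<and> card Y = 2 \<and> card (verts G - Y) = 2"
proof -
  have wf: "wf_graph G" using kc by (rule k_connected_wf_graph)
  have fV: "finite (verts G)" using wf by (rule wf_graphD)
  let ?Yc = "verts G - Y"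
  have cut_Yc: "cut G ?Yc = cut G Y" by (rule cut_Diff_verts[OF wf])
  have fin: "finite (\<Union>e\<in>cut G Y. endpts G e \<inter> Z)" for Z
    by (rule finite_subset[OF _ fV]) (auto dest: cut_subset_edges[THEN subsetD] wf_graphD(3)[OF wf])
  have "Y \<subseteq> (\<Union>e\<in>cut G Y. endpts G e \<inter> Y)"
    using k_connected_3_small_cut_ends[OF kc Y(1) c2] Y(3) by blast
  then have "card Y \<le> card (cut G Y)"
    using le_trans[OF card_mono[OF fin] card_cut_ends_le[OF wf, of Y]] by blast
  moreover have "?Yc \<subseteq> (\<Union>e\<in>cut G Y. endpts G e \<inter> ?Yc)"
    using k_connected_3_small_cut_ends[OF kc _ _, of ?Yc] Y(1,2) c2 cut_Yc by auto
  then have "card ?Yc \<le> card (cut G Y)"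
    using le_trans[OF card_mono[OF fin] card_cut_ends_le[OF wf, of ?Yc, unfolded cut_Yc]] by blast
  moreover have "card (verts G) = card Y + card ?Yc"
    using card_Diff_subset[OF finite_subset[OF Y(1) fV] Y(1)] card_mono[OF fV Y(1)] by simp
  moreover have "card (verts G) > 3" using kc by (simp add: k_connected_def)
  ultimately show ?thesis using c2 by linarith
qed

text \<open>A 3-connected graph is 3-edge-connected: a cut of at most two edges would have
  two-element shores joined by two disjoint edges \<open>y1 t1\<close>, \<open>y2 t2\<close>, and then \<open>{y1, t2}\<close>
  separates \<open>y2\<close> from \<open>t1\<close>.\<close>

lemma k_connected_3_card_cut_ge_3:
  assumes kc: "k_connected 3 G" and Y: "Y \<subseteq> verts G" "Y \<noteq> {}" "verts G - Y \<noteq> {}"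
  shows "3 \<le> card (cut G Y)"
proof (rule ccontr)
  assume "\<not> ?thesis"
  then have small: "card (cut G Y) \<le> 2" by simp
  have wf: "wf_graph G" using kc by (rule k_connected_wf_graph)
  let ?Yc = "verts G - Y"
  have cC: "card (cut G Y) = 2" and cY: "card Y = 2" and cYc: "card ?Yc = 2"
    using k_connected_3_small_cut_cards[OF kc Y small] by auto
  obtain c1 c2 where C: "cut G Y = {c1, c2}" using cC card_2_iff by metis
  have "c1 \<in> cut G Y" "c2 \<in> cut G Y" unfolding C by simp_all
  obtain y1 t1 where c1: "endpts G c1 = {y1, t1}" "y1 \<in> Y" "t1 \<notin> Y" "t1 \<in> verts G"
    by (rule cut_edgeE[OF wf \<open>c1 \<in> cut G Y\<close>])
  obtain y2 t2 where c2: "endpts G c2 = {y2, t2}" "y2 \<in> Y" "t2 \<notin> Y" "t2 \<in> verts G"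
    by (rule cut_edgeE[OF wf \<open>c2 \<in> cut G Y\<close>])
  have "Y \<subseteq> (\<Union>e\<in>cut G Y. endpts G e \<inter> Y)"
    using k_connected_3_small_cut_ends[OF kc Y(1) small] Y(3) by blast
  then have "Y \<subseteq> {y1, y2}" unfolding C using c1 c2 by auto
  then have Y12: "Y = {y1, y2}" using c1 c2 by blast
  then have "y1 \<noteq> y2" using cY by auto
  have "?Yc \<subseteq> (\<Union>e\<in>cut G ?Yc. endpts G e \<inter> ?Yc)"
    using k_connected_3_small_cut_ends[OF kc _ _, of ?Yc] Y(1,2) small cut_Diff_verts[OF wf, of Y]
    by auto
  then have "?Yc \<subseteq> {t1, t2}" unfolding cut_Diff_verts[OF wf] C using c1 c2 by auto
  then have "card ?Yc \<le> card {t1, t2}" by (rule card_mono[rotated]) simp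
  then have "t1 \<noteq> t2" using cYc by (cases "t1 = t2") auto
  show False
  proof (rule k_connected_3_no_2_separator[OF kc, of "{y1, t2}" "{y2}" y2 t1])
    show "{y1, t2} \<subseteq> verts G" using Y(1) Y12 c2 by auto
    show "card {y1, t2} \<le> 2" by (simp add: card_insert_if)
    show "{y2} \<subseteq> verts G - {y1, t2}" "y2 \<in> {y2}" "t1 \<in> verts G - {y1, t2} - {y2}"
      using Y(1) Y12 c1 c2 \<open>y1 \<noteq> y2\<close> \<open>t1 \<noteq> t2\<close> by auto
    fix e assume e: "e \<in> edges G" "endpts G e \<inter> {y2} \<noteq> {}"
    show "endpts G e \<subseteq> {y2} \<union> {y1, t2}"
    proof (cases "endpts G e \<subseteq> Y")
      case False
      then have "e \<in> cut G Y" using cutI[OF wf e(1)] e(2) c2(2) by blast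
      then have "e = c1 \<or> e = c2" unfolding C by simp
      then show ?thesis using c1 c2 e(2) \<open>y1 \<noteq> y2\<close> by auto
    qed (use Y12 in auto)
  qed
qed

lemma no_cut_within_two_edges:
  assumes "k_connected 3 G" "Y \<subseteq> verts G" "cut G Y \<subseteq> {\<epsilon>1, \<epsilon>2}" "y \<in> Y" "x \<in> verts G - Y"
  shows False
proof -
  have "card (cut G Y) \<le> card {\<epsilon>1, \<epsilon>2}" using assms(3) by (rule card_mono[rotated]) simp
  also have "\<dots> \<le> 2" by (simp add: card_insert_if)
  finally show False using k_connected_3_card_cut_ge_3[OF assms(1,2)] assms(4,5) by auto
qed

section \<open>Contracting a shore of a 3-cut\<close>

definition contract_vertex :: "'v set \<Rightarrow> 'v \<Rightarrow> 'v option" where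
  "contract_vertex X v = (if v \<in> X then None else Some v)"

lemma contract_vertex_simps [simp]:
  "v \<in> X \<Longrightarrow> contract_vertex X v = None"
  "v \<notin> X \<Longrightarrow> contract_vertex X v = Some v"
  by (simp_all add: contract_vertex_def)

lemma contract_simps [simp]:
  "verts (contract G X) = insert None (Some ` (verts G - X))"
  "edges (contract G X) = {e \<in> edges G. \<not> endpts G e \<subseteq> X}"
  "endpts (contract G X) e = contract_vertex X ` endpts G e"
  by (simp_all add: contract_def contract_vertex_def)

lemma Some_image_vimage: "Some ` {v. Some v \<in> S} = S - {None}"
  by (auto simp: image_iff) (metis option.collapse)

lemma wf_graph_contract:
  assumes wf: "wf_graph G"
  shows "wf_graph (contract G X)"
  unfolding wf_graph_def
proof (intro conjI ballI)
  show "finite (verts (contract G X))" "finite (edges (contract G X))"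
    using wf_graphD(1,2)[OF wf] by simp_all
  fix e assume "e \<in> edges (contract G X)"
  then have eG: "e \<in> edges G" and nX: "\<not> endpts G e \<subseteq> X" by auto
  obtain u v where uv: "endpts G e = {u, v}" "u \<noteq> v" "u \<in> verts G" "v \<in> verts G"
    using wf_graph_endptsE[OF wf eG] by blast
  show "endpts (contract G X) e \<subseteq> verts (contract G X)"
    using uv by (auto simp: contract_vertex_def)
  show "card (endpts (contract G X) e) = 2"
    using uv nX by (cases "u \<in> X"; cases "v \<in> X") auto
qed

lemma card_verts_contract:
  assumes "wf_graph G"
  shows "card (verts (contract G X)) = card (verts G - X) + 1"
  using wf_graphD(1)[OF assms] by (simp add: card_image)

lemma degree_contract_None:
  assumes wf: "wf_graph G"
  shows "degree (contract G X) None = card (cut G X)"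
proof -
  have "{e \<in> edges (contract G X). None \<in> endpts (contract G X) e} = cut G X"
  proof (intro set_eqI iffI)
    fix e assume "e \<in> {e \<in> edges (contract G X). None \<in> endpts (contract G X) e}"
    then have e: "e \<in> edges G" "\<not> endpts G e \<subseteq> X" "endpts G e \<inter> X \<noteq> {}"
      by (auto simp: contract_vertex_def split: if_splits)
    then show "e \<in> cut G X" using cutI[OF wf] by blast
  next
    fix e assume e: "e \<in> cut G X"
    obtain y t where "endpts G e = {y, t}" "y \<in> X" "t \<notin> X" by (rule cut_edgeE[OF wf e])
    then show "e \<in> {e \<in> edges (contract G X). None \<in> endpts (contract G X) e}"
      using e by (auto simp: cut_def)
  qed
  then show ?thesis by (simp add: degree_def)
qed

lemma cubic_contract:
  assumes cub: "cubic G" and c3: "card (cut G X) = 3"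
  shows "cubic (contract G X)"
proof -
  have wf: "wf_graph G" using cub by (rule cubic_wf_graph)
  have "degree (contract G X) (Some v) = 3" if v: "v \<in> verts G - X" for v
  proof -
    have "{e \<in> edges (contract G X). Some v \<in> endpts (contract G X) e} =
        {e \<in> edges G. v \<in> endpts G e}"
      using v by (auto simp: contract_vertex_def split: if_splits)
    then show ?thesis using cub v by (simp add: degree_def cubic_def)
  qed
  then show ?thesis
    using wf_graph_contract[OF wf] degree_contract_None[OF wf] c3 by (auto simp: cubic_def)
qed

lemma adj_rel_del_verts_contract:
  assumes "e \<in> edges G" "endpts G e = {y, z}"
    and "contract_vertex X y \<notin> S" "contract_vertex X z \<notin> S"
  shows "(contract_vertex X y, contract_vertex X z) \<in> (adj_rel (del_verts (contract G X) S))\<^sup>*"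
proof (cases "endpts G e \<subseteq> X")
  case False
  then have "(contract_vertex X y, contract_vertex X z) \<in> adj_rel (del_verts (contract G X) S)"
    using assms unfolding adj_rel_def by auto
  then show ?thesis by blast
qed (use assms in auto)

text \<open>A path of \<open>G\<close> avoiding \<open>S\<close> maps to a walk of the contraction.\<close>

lemma connected_del_verts_contract_keep:
  assumes kc: "k_connected 3 G" and XV: "X \<subseteq> verts G" and x0: "x0 \<in> X"
    and S: "S \<subseteq> verts (contract G X)" "card S < 3" "None \<notin> S"
  shows "connected_graph (del_verts (contract G X) S)"
proof -
  define S0 where "S0 = {v. Some v \<in> S}"
  have SS0: "S = Some ` S0" unfolding S0_def Some_image_vimage using S(3) by simp
  have S0V: "S0 \<subseteq> verts G - X" using S(1) unfolding S0_def by auto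
  have "card S0 < 3" using S(2) unfolding SS0 by (simp add: card_image)
  then have conn: "connected_graph (del_verts G S0)" using kc S0V unfolding k_connected_def by auto
  let ?K = "del_verts (contract G X) S"
  have walk: "(contract_vertex X u, contract_vertex X v) \<in> (adj_rel ?K)\<^sup>*"
    if "(u, v) \<in> (adj_rel (del_verts G S0))\<^sup>*" for u v
    using that
  proof (induction rule: rtrancl_induct)
    case (step y z)
    then obtain e where e: "e \<in> edges G" "endpts G e \<inter> S0 = {}" "endpts G e = {y, z}"
      unfolding adj_rel_def by auto
    have "contract_vertex X y \<notin> S" "contract_vertex X z \<notin> S"
      using e(2,3) S(3) unfolding SS0 by (auto simp: contract_vertex_def)
    then show ?case using adj_rel_del_verts_contract[OF e(1,3)] step.IH by (meson rtrancl_trans)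
  qed simp
  show ?thesis
  proof (rule connected_graphI[of None])
    fix p assume p: "p \<in> verts ?K"
    show "(None, p) \<in> (adj_rel ?K)\<^sup>*"
    proof (cases p)
      case (Some v)
      then have "v \<in> verts G - X - S0" using p unfolding SS0 by auto
      then have "(x0, v) \<in> (adj_rel (del_verts G S0))\<^sup>*"
        using conn x0 XV S0V unfolding connected_graph_def by auto
      from walk[OF this] show ?thesis using x0 \<open>v \<in> verts G - X - S0\<close> Some by simp
    qed simp
  qed (use S(3) in simp)
qed

text \<open>A part \<open>Z\<close> of \<open>G - X - S0\<close> that is closed under adjacency must send at least two edges
  into \<open>X\<close>: otherwise \<open>S0\<close> together with the end in \<open>X\<close> of the only such edge separates \<open>Z\<close>
  from the rest of \<open>X\<close>.\<close>

lemma two_cut_edges_meet_closed_part: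
  assumes kc: "k_connected 3 G" and XV: "X \<subseteq> verts G" and cX: "card X \<ge> 2"
    and S0: "S0 \<subseteq> verts G - X" "card S0 \<le> 1"
    and Z: "Z \<subseteq> verts G - X - S0" "z0 \<in> Z"
    and closed: "\<And>e z q. e \<in> edges G \<Longrightarrow> endpts G e = {z, q} \<Longrightarrow> z \<in> Z \<Longrightarrow>
        q \<in> verts G - X - S0 \<Longrightarrow> q \<in> Z"
  shows "2 \<le> card {e \<in> cut G X. endpts G e \<inter> Z \<noteq> {}}" (is "2 \<le> card ?CZ")
proof (rule ccontr)
  assume "\<not> ?thesis"
  then have cZ: "card ?CZ \<le> 1" by simp
  have wf: "wf_graph G" using kc by (rule k_connected_wf_graph)
  define T where "T = (\<Union>e\<in>?CZ. endpts G e \<inter> X)"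
  have "card T \<le> (\<Sum>e\<in>?CZ. card (endpts G e \<inter> X))"
    unfolding T_def by (rule card_UN_le) (simp add: finite_cut[OF wf])
  also have "\<dots> = card ?CZ" by (simp add: cut_def)
  finally have cT: "card T \<le> 1" using cZ by simp
  have TX: "T \<subseteq> X" unfolding T_def by blast
  have "finite T" using TX XV wf_graphD(1)[OF wf] by (meson finite_subset)
  have "\<not> X \<subseteq> T"
  proof
    assume "X \<subseteq> T"
    then have "card X \<le> card T" by (rule card_mono[OF \<open>finite T\<close>])
    then show False using cT cX by linarith
  qed
  then obtain x where x: "x \<in> X" "x \<notin> T" by blast
  show False
  proof (rule k_connected_3_no_2_separator[OF kc, of "S0 \<union> T" Z z0 x])
    show "card (S0 \<union> T) \<le> 2" using card_Un_le[of S0 T] S0(2) cT by simp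
    fix e assume e: "e \<in> edges G" "endpts G e \<inter> Z \<noteq> {}"
    then obtain z where z: "z \<in> endpts G e" "z \<in> Z" by blast
    obtain u v where uv: "endpts G e = {u, v}" "u \<noteq> v" "u \<in> verts G" "v \<in> verts G"
      using wf_graph_endptsE[OF wf e(1)] by blast
    obtain q where eq: "endpts G e = {z, q}" "q \<in> verts G"
      using uv z(1) by (metis insert_commute insertE singletonD)
    have "q \<in> Z \<union> (S0 \<union> T)"
    proof (cases "q \<in> X")
      case True
      have "z \<notin> X" using z Z by auto
      then have "e \<in> ?CZ" using e True eq unfolding cut_def by (auto simp: Int_insert_left)
      then show ?thesis unfolding T_def using True eq by blast
    qed (use closed[OF e(1) eq(1) z(2)] eq(2) in blast)
    then show "endpts G e \<subseteq> Z \<union> (S0 \<union> T)" using eq z by auto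
  qed (use S0 TX XV Z x in auto)
qed

text \<open>Hence \<open>G - X - S0\<close> cannot split into two parts with no edge between them, since
  \<open>\<partial>(X)\<close> has only three edges.\<close>

lemma no_split_outside_small_cut:
  assumes kc: "k_connected 3 G" and XV: "X \<subseteq> verts G" and cX: "card X \<ge> 2"
    and c3: "card (cut G X) \<le> 3" and S0: "S0 \<subseteq> verts G - X" "card S0 \<le> 1"
    and A: "A \<subseteq> verts G - X - S0" "a \<in> A" "b \<in> verts G - X - S0 - A"
    and closed: "\<And>e z q. e \<in> edges G \<Longrightarrow> endpts G e = {z, q} \<Longrightarrow> z \<in> A \<Longrightarrow>
        q \<in> verts G - X - S0 \<Longrightarrow> q \<in> A"
  shows False
proof -
  have wf: "wf_graph G" using kc by (rule k_connected_wf_graph)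
  let ?R = "verts G - X - S0"
  let ?CA = "{e \<in> cut G X. endpts G e \<inter> A \<noteq> {}}"
  let ?CB = "{e \<in> cut G X. endpts G e \<inter> (?R - A) \<noteq> {}}"
  have "?CA \<inter> ?CB = {}"
  proof (rule ccontr)
    assume "?CA \<inter> ?CB \<noteq> {}"
    then obtain e a a' where
      e: "e \<in> cut G X" "a \<in> endpts G e" "a \<in> A" "a' \<in> endpts G e" "a' \<in> ?R - A"
      by blast
    have "e \<in> edges G" using e(1) by (simp add: cut_def)
    obtain u v where "endpts G e = {u, v}" "u \<noteq> v"
      using wf_graph_endptsE[OF wf \<open>e \<in> edges G\<close>] by blast
    moreover have "a \<noteq> a'" using e(3,5) by blast
    ultimately have "endpts G e = {a, a'}" using e(2,4) by auto
    then have "endpts G e \<inter> X = {}" using e(3,5) A(1) by auto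
    then show False using e(1) by (simp add: cut_def)
  qed
  then have "card ?CA + card ?CB = card (?CA \<union> ?CB)"
    using finite_cut[OF wf, of X] by (intro card_Un_disjoint[symmetric]) auto
  also have "\<dots> \<le> card (cut G X)" using finite_cut[OF wf, of X] by (intro card_mono) auto
  finally have "card ?CA + card ?CB \<le> 3" using c3 by simp
  moreover have "2 \<le> card ?CA"
    by (rule two_cut_edges_meet_closed_part[OF kc XV cX S0 A(1,2)]) (use closed in blast)
  moreover have "2 \<le> card ?CB"
  proof (rule two_cut_edges_meet_closed_part[OF kc XV cX S0, of "?R - A" b])
    fix e z q assume "e \<in> edges G" "endpts G e = {z, q}" "z \<in> ?R - A" "q \<in> ?R"
    then show "q \<in> ?R - A" using closed[of e q z] by (auto simp: insert_commute)
  qed (use A(3) in auto)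
  ultimately show False by linarith
qed

lemma connected_del_verts_contract_hit:
  assumes kc: "k_connected 3 G" and XV: "X \<subseteq> verts G" and cX: "card X \<ge> 2"
    and cXc: "card (verts G - X) \<ge> 3" and c3: "card (cut G X) \<le> 3"
    and S: "S \<subseteq> verts (contract G X)" "card S < 3" "None \<in> S"
  shows "connected_graph (del_verts (contract G X) S)"
proof -
  have wf: "wf_graph G" using kc by (rule k_connected_wf_graph)
  define S0 where "S0 = {v. Some v \<in> S}"
  have SS0: "S = insert None (Some ` S0)" unfolding S0_def Some_image_vimage using S(3) by auto
  have S0V: "S0 \<subseteq> verts G - X" using S(1) unfolding S0_def by auto
  have fS0: "finite S0" using S0V wf_graphD(1)[OF wf] by (meson finite_subset finite_Diff)
  have "card S = card S0 + 1" unfolding SS0 using fS0 by (simp add: card_image)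
  then have cS0: "card S0 \<le> 1" using S(2) by simp
  let ?K = "del_verts (contract G X) S"
  let ?R = "verts G - X - S0"
  have "card ?R \<ge> 2" using diff_card_le_card_Diff[OF fS0, of "verts G - X"] cXc cS0 by simp
  then obtain r where r: "r \<in> ?R" by (metis all_not_in_conv card.empty not_numeral_le_zero)
  define A where "A = {v \<in> ?R. (Some r, Some v) \<in> (adj_rel ?K)\<^sup>*}"
  have closed: "q \<in> A" if "e \<in> edges G" "endpts G e = {z, q}" "z \<in> A" "q \<in> ?R" for e z q
  proof -
    have "e \<in> edges ?K" "endpts ?K e = {Some z, Some q}" using that unfolding A_def SS0 by auto
    then have "(Some z, Some q) \<in> adj_rel ?K" unfolding adj_rel_def by blast
    then show ?thesis using that(3,4) unfolding A_def by (auto intro: rtrancl_into_rtrancl)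
  qed
  have "?R \<subseteq> A"
    using no_split_outside_small_cut[OF kc XV cX c3 S0V cS0, of A r] closed r
    unfolding A_def by blast
  show ?thesis
  proof (rule connected_graphI[of "Some r"])
    fix p assume "p \<in> verts ?K"
    then obtain v where "p = Some v" "v \<in> ?R" unfolding SS0 by auto
    then show "(Some r, p) \<in> (adj_rel ?K)\<^sup>*" using \<open>?R \<subseteq> A\<close> unfolding A_def by auto
  qed (use r SS0 in auto)
qed

lemma k_connected_3_contract:
  assumes kc: "k_connected 3 G" and XV: "X \<subseteq> verts G" and cX: "card X \<ge> 2"
    and cXc: "card (verts G - X) \<ge> 3" and c3: "card (cut G X) \<le> 3"
  shows "k_connected 3 (contract G X)"
proof -
  have wf: "wf_graph G" using kc by (rule k_connected_wf_graph)
  obtain x0 where "x0 \<in> X" using cX by (metis all_not_in_conv card.empty not_numeral_le_zero)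
  show ?thesis
    unfolding k_connected_def
  proof (intro conjI allI impI)
    show "wf_graph (contract G X)" by (rule wf_graph_contract[OF wf])
    show "3 < card (verts (contract G X))" using card_verts_contract[OF wf, of X] cXc by simp
    fix S assume S: "S \<subseteq> verts (contract G X) \<and> card S < 3"
    show "connected_graph (del_verts (contract G X) S)"
    proof (cases "None \<in> S")
      case True
      then show ?thesis using connected_del_verts_contract_hit[OF kc XV cX cXc c3] S by blast
    next
      case False
      then show ?thesis using connected_del_verts_contract_keep[OF kc XV \<open>x0 \<in> X\<close>] S by blast
    qed
  qed
qed

section \<open>Hall's theorem and perfect matchings\<close>

lemma matching_Un:
  assumes h1: "inj_on h1 A" "\<forall>a\<in>A. h1 a \<in> R1 \<and> rel a (h1 a)"
    and h2: "inj_on h2 B" "\<forall>b\<in>B. h2 b \<in> R2 \<and> rel b (h2 b)"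
    and disj: "R1 \<inter> R2 = {}" and L: "A \<union> B = L" and R: "R1 \<union> R2 \<subseteq> R"
  shows "\<exists>h. inj_on h L \<and> (\<forall>l\<in>L. h l \<in> R \<and> rel l (h l))"
proof -
  define h where "h x = (if x \<in> A then h1 x else h2 x)" for x
  have "inj_on h A" using h1(1) unfolding h_def by (simp add: inj_on_def)
  moreover have "inj_on h (B - A)" using h2(1) unfolding h_def by (simp add: inj_on_def)
  moreover have "h ` A \<inter> h ` (B - A) = {}" using h1(2) h2(2) disj unfolding h_def by auto
  ultimately have "inj_on h (A \<union> B)"
    by (subst Un_Diff_cancel[symmetric], subst inj_on_Un) (simp add: Diff_triv)
  moreover have "\<forall>l\<in>A \<union> B. h l \<in> R \<and> rel l (h l)" using h1(2) h2(2) R unfolding h_def by auto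
  ultimately show ?thesis using L by blast
qed

lemma hall_condition_Diff_critical:
  assumes fL: "finite L" and hall: "\<And>S. S \<subseteq> L \<Longrightarrow> card S \<le> card {r\<in>R. \<exists>s\<in>S. rel s r}"
    and S0: "S0 \<subseteq> L" "card {r\<in>R. \<exists>s\<in>S0. rel s r} \<le> card S0" and S: "S \<subseteq> L - S0"
  shows "card S \<le> card {r\<in>R - {r\<in>R. \<exists>s\<in>S0. rel s r}. \<exists>s\<in>S. rel s r}"
proof -
  let ?N0 = "{r\<in>R. \<exists>s\<in>S0. rel s r}"
  have "finite S" "finite S0" using S S0(1) fL by (meson finite_Diff finite_subset)+
  moreover have "S \<inter> S0 = {}" using S by blast
  ultimately have "card S + card S0 = card (S \<union> S0)" by (simp add: card_Un_disjoint)
  also have "\<dots> \<le> card {r\<in>R. \<exists>s\<in>S \<union> S0. rel s r}" using S S0(1) by (intro hall) auto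
  also have "{r\<in>R. \<exists>s\<in>S \<union> S0. rel s r} = {r\<in>R - ?N0. \<exists>s\<in>S. rel s r} \<union> ?N0" by auto
  also have "card \<dots> \<le> card {r\<in>R - ?N0. \<exists>s\<in>S. rel s r} + card ?N0" by (rule card_Un_le)
  finally show ?thesis using S0(2) by simp
qed

lemma hall_condition_Diff_surplus:
  assumes surplus: "\<And>S. S \<subseteq> L \<Longrightarrow> S \<noteq> {} \<Longrightarrow> S \<noteq> L \<Longrightarrow> card S < card {r\<in>R. \<exists>s\<in>S. rel s r}"
    and "l \<in> L" "S \<subseteq> L - {l}"
  shows "card S \<le> card {r'\<in>R - {r}. \<exists>s\<in>S. rel s r'}"
proof (cases "S = {}")
  case False
  then have "card S < card {r\<in>R. \<exists>s\<in>S. rel s r}" using surplus assms(2,3) by blast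
  then have "card S \<le> card {r\<in>R. \<exists>s\<in>S. rel s r} - card {r}" by simp
  also have "\<dots> \<le> card ({r\<in>R. \<exists>s\<in>S. rel s r} - {r})" by (rule diff_card_le_card_Diff) simp
  also have "{r\<in>R. \<exists>s\<in>S. rel s r} - {r} = {r'\<in>R - {r}. \<exists>s\<in>S. rel s r'}" by auto
  finally show ?thesis .
qed simp

theorem hall_marriage:
  fixes rel :: "'a \<Rightarrow> 'b \<Rightarrow> bool"
  assumes "finite L" "finite R" "\<And>S. S \<subseteq> L \<Longrightarrow> card S \<le> card {r\<in>R. \<exists>s\<in>S. rel s r}"
  shows "\<exists>h. inj_on h L \<and> (\<forall>l\<in>L. h l \<in> R \<and> rel l (h l))"
  using assms
proof (induction "card L" arbitrary: L R rule: less_induct)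
  case less
  note fL = less.prems(1) and fR = less.prems(2) and hall = less.prems(3)
  show ?case
  proof (cases "\<exists>S0. S0 \<subseteq> L \<and> S0 \<noteq> {} \<and> S0 \<noteq> L \<and> card {r\<in>R. \<exists>s\<in>S0. rel s r} \<le> card S0")
    case True
    then obtain S0 where S0: "S0 \<subseteq> L" "S0 \<noteq> {}" "S0 \<noteq> L"
      and crit: "card {r\<in>R. \<exists>s\<in>S0. rel s r} \<le> card S0" by blast
    let ?N0 = "{r\<in>R. \<exists>s\<in>S0. rel s r}"
    have fS0: "finite S0" using S0(1) fL by (rule finite_subset)
    have less0: "card S0 < card L" using S0 fL by (meson psubset_card_mono psubsetI)
    have hall0: "card S \<le> card {r\<in>R. \<exists>s\<in>S. rel s r}" if "S \<subseteq> S0" for S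
      using that S0(1) by (intro hall) auto
    obtain h1 where h1: "inj_on h1 S0" "\<forall>x\<in>S0. h1 x \<in> R \<and> rel x (h1 x)"
      using less.hyps[OF less0 fS0 fR hall0] by blast
    then have h1': "\<forall>x\<in>S0. h1 x \<in> ?N0 \<and> rel x (h1 x)" by blast
    have "0 < card S0" using fS0 S0(2) by (simp add: card_gt_0_iff)
    then have less2: "card (L - S0) < card L"
      using card_Diff_subset[OF fS0 S0(1)] card_mono[OF fL S0(1)] by linarith
    have "finite (L - S0)" "finite (R - ?N0)" using fL fR by simp_all
    then obtain h2 where h2: "inj_on h2 (L - S0)" "\<forall>x\<in>L - S0. h2 x \<in> R - ?N0 \<and> rel x (h2 x)"
      using less.hyps[OF less2 _ _ hall_condition_Diff_critical[OF fL hall S0(1) crit]] by blast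
    show ?thesis by (rule matching_Un[OF h1(1) h1' h2]) (use S0(1) in auto)
  next
    case False
    then have surplus: "card S < card {r\<in>R. \<exists>s\<in>S. rel s r}"
      if "S \<subseteq> L" "S \<noteq> {}" "S \<noteq> L" for S
      using that by (meson not_le)
    show ?thesis
    proof (cases "L = {}")
      case False
      then obtain l where l: "l \<in> L" by blast
      have "card {l} \<le> card {r\<in>R. \<exists>s\<in>{l}. rel s r}" using l by (intro hall) simp
      then have "0 < card {r\<in>R. \<exists>s\<in>{l}. rel s r}" by simp
      then have "{r\<in>R. \<exists>s\<in>{l}. rel s r} \<noteq> {}" by (metis card.empty less_irrefl)
      then obtain r where r: "r \<in> R" "rel l r" by blast
      have less1: "card (L - {l}) < card L" using fL l by (rule card_Diff1_less)
      have "finite (L - {l})" "finite (R - {r})" using fL fR by simp_all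
      then obtain h2 where h2: "inj_on h2 (L - {l})" "\<forall>x\<in>L - {l}. h2 x \<in> R - {r} \<and> rel x (h2 x)"
        using less.hyps[OF less1 _ _ hall_condition_Diff_surplus[OF surplus l]] by blast
      have h1: "inj_on (\<lambda>_. r) {l}" "\<forall>x\<in>{l}. r \<in> {r} \<and> rel x r" using r by auto
      show ?thesis by (rule matching_Un[OF h1 h2]) (use l r in auto)
    qed simp
  qed
qed

definition matches_exactly :: "('v, 'e) mgraph \<Rightarrow> 'e set \<Rightarrow> 'v set \<Rightarrow> bool" where
  "matches_exactly G M V \<longleftrightarrow>
     (\<forall>e\<in>M. endpts G e \<subseteq> V) \<and> (\<forall>v\<in>V. \<exists>!e. e \<in> M \<and> v \<in> endpts G e)"

lemma perfect_matchingI: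
  "M \<subseteq> edges G \<Longrightarrow> matches_exactly G M (verts G) \<Longrightarrow> perfect_matching G M"
  by (simp add: perfect_matching_def matches_exactly_def)

lemma perfect_matching_del_edges:
  "perfect_matching G M \<Longrightarrow> M \<subseteq> edges G - F \<Longrightarrow> perfect_matching (del_edges G F) M"
  by (simp add: perfect_matching_def)

lemma perfect_matching_of_del_edges:
  "perfect_matching (del_edges G F) M \<Longrightarrow> perfect_matching G M \<and> M \<inter> F = {}"
  by (auto simp: perfect_matching_def)

lemma matches_exactly_Un:
  assumes M1: "matches_exactly G M1 V1" and M2: "matches_exactly G M2 V2" and "V1 \<inter> V2 = {}"
  shows "matches_exactly G (M1 \<union> M2) (V1 \<union> V2)"
  unfolding matches_exactly_def
proof (intro conjI ballI)
  show "endpts G e \<subseteq> V1 \<union> V2" if "e \<in> M1 \<union> M2" for e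
    using that M1 M2 unfolding matches_exactly_def by blast
  fix v assume "v \<in> V1 \<union> V2"
  then show "\<exists>!e. e \<in> M1 \<union> M2 \<and> v \<in> endpts G e"
  proof
    assume "v \<in> V1"
    then have "v \<notin> endpts G e" if "e \<in> M2" for e
      using that M2 \<open>V1 \<inter> V2 = {}\<close> unfolding matches_exactly_def by blast
    then show ?thesis using M1 \<open>v \<in> V1\<close> unfolding matches_exactly_def by blast
  next
    assume "v \<in> V2"
    then have "v \<notin> endpts G e" if "e \<in> M1" for e
      using that M1 \<open>V1 \<inter> V2 = {}\<close> unfolding matches_exactly_def by blast
    then show ?thesis using M2 \<open>v \<in> V2\<close> unfolding matches_exactly_def by blast
  qed
qed

lemma matches_exactly_bij:
  assumes LR: "L \<inter> R = {}" and h: "inj_on h L" "h ` L = R"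
    and pk: "\<And>l. l \<in> L \<Longrightarrow> endpts G (pk l) = {l, h l}"
  shows "matches_exactly G (pk ` L) (L \<union> R)"
  unfolding matches_exactly_def
proof (intro conjI ballI)
  show "endpts G e \<subseteq> L \<union> R" if "e \<in> pk ` L" for e using that pk h(2) by auto
  fix v assume "v \<in> L \<union> R"
  then obtain l where l: "l \<in> L" "v = l \<or> v = h l" using h(2) by blast
  show "\<exists>!e. e \<in> pk ` L \<and> v \<in> endpts G e"
  proof (rule ex1I[of _ "pk l"])
    show "pk l \<in> pk ` L \<and> v \<in> endpts G (pk l)" using l pk by auto
    fix e assume "e \<in> pk ` L \<and> v \<in> endpts G e"
    then obtain l' where l': "l' \<in> L" "e = pk l'" "v = l' \<or> v = h l'" using pk by auto
    have "h l \<in> R" "h l' \<in> R" using h(2) l(1) l'(1) by auto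
    then have "l' = l" using l l' LR inj_onD[OF h(1)] by blast
    then show "e = pk l" using l' by simp
  qed
qed

lemma perfect_matching_extend:
  assumes wf: "wf_graph K" and PQ: "P \<inter> Q = {}" "P \<union> Q = verts K"
    and A: "A \<subseteq> edges K"
    and D: "DP \<subseteq> P" "DQ \<subseteq> Q" "card (P - DP) = card (Q - DQ)"
    and F: "F \<subseteq> edges K" "matches_exactly K F (DP \<union> DQ)"
    and hall: "\<And>S. S \<subseteq> P - DP \<Longrightarrow> card S \<le> card {r\<in>Q - DQ. \<exists>s\<in>S. \<exists>e\<in>A. endpts K e = {s, r}}"
  shows "\<exists>M. perfect_matching K M \<and> F \<subseteq> M \<and> M \<subseteq> A \<union> F"
proof -
  let ?L = "P - DP" and ?R = "Q - DQ"
  have fin: "finite ?L" "finite ?R"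
    using PQ(2) wf_graphD(1)[OF wf] by (metis finite_Diff finite_Un)+
  obtain h where h: "inj_on h ?L" "\<forall>l\<in>?L. h l \<in> ?R \<and> (\<exists>e\<in>A. endpts K e = {l, h l})"
    using hall_marriage[OF fin hall] by blast
  have "h ` ?L \<subseteq> ?R" "card (h ` ?L) = card ?R" using h(2) card_image[OF h(1)] D(3) by auto
  then have hLR: "h ` ?L = ?R" using card_subset_eq[OF fin(2)] by blast
  define pk where "pk l = (SOME e. e \<in> A \<and> endpts K e = {l, h l})" for l
  have pk: "pk l \<in> A \<and> endpts K (pk l) = {l, h l}" if "l \<in> ?L" for l
    using h(2) that unfolding pk_def by (metis (mono_tags, lifting) someI_ex)
  have "matches_exactly K (pk ` ?L) (?L \<union> ?R)"
    by (rule matches_exactly_bij[OF _ h(1) hLR]) (use PQ(1) pk in auto)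
  then have "matches_exactly K (F \<union> pk ` ?L) ((DP \<union> DQ) \<union> (?L \<union> ?R))"
    by (rule matches_exactly_Un[OF F(2)]) (use PQ(1) D(1,2) in auto)
  moreover have "(DP \<union> DQ) \<union> (?L \<union> ?R) = verts K" using PQ D(1,2) by auto
  ultimately have "perfect_matching K (F \<union> pk ` ?L)"
    using perfect_matchingI[of "F \<union> pk ` ?L" K] F(1) A pk by auto
  moreover have "pk ` ?L \<subseteq> A" using pk by auto
  ultimately show ?thesis by blast
qed

section \<open>A criterion for near-bipartiteness\<close>

lemma near_bipartite_rd_sym: "near_bipartite_rd G e1 e2 \<Longrightarrow> near_bipartite_rd G e2 e1"
  unfolding near_bipartite_rd_def by (auto simp: insert_commute)

locale doubleton_over_bipartite =
  fixes K :: "('w, 'f) mgraph" and \<epsilon>1 \<epsilon>2 :: 'f and P Q :: "'w set"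
  assumes kc: "k_connected 3 K" and cub: "cubic K"
    and eps: "\<epsilon>1 \<in> edges K" "\<epsilon>2 \<in> edges K" "\<epsilon>1 \<noteq> \<epsilon>2"
    and bip: "bipartition (del_edges K {\<epsilon>1, \<epsilon>2}) P Q"
    and eP: "endpts K \<epsilon>1 \<subseteq> P" and eQ: "endpts K \<epsilon>2 \<subseteq> Q"
begin

abbreviation H where "H \<equiv> del_edges K {\<epsilon>1, \<epsilon>2}"

lemma wf: "wf_graph K"
  using cub by (rule cubic_wf_graph)

lemma PQ: "P \<inter> Q = {}" "P \<union> Q = verts K"
  using bip by (auto simp: bipartition_def)

lemma finite_PQ: "finite P" "finite Q"
  using PQ(2) wf_graphD(1)[OF wf] by (metis finite_Un)+

lemma H_edgeE:
  assumes "e \<in> edges K - {\<epsilon>1, \<epsilon>2}"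
  obtains p q where "p \<in> P" "q \<in> Q" "endpts K e = {p, q}"
  using assms bip unfolding bipartition_def del_edges_simps by blast

definition neighbours :: "'w set \<Rightarrow> 'w set" where
  "neighbours S = {q\<in>Q. \<exists>e\<in>edges K - {\<epsilon>1, \<epsilon>2}. \<exists>s\<in>S. endpts K e = {s, q}}"

lemma neighbours_subset: "neighbours S \<subseteq> Q"
  unfolding neighbours_def by auto

text \<open>An edge \<open>p q\<close> of \<open>H\<close> with \<open>p \<in> S\<close> has \<open>q \<in> neighbours S\<close>, so it crosses \<open>\<partial>(S \<union> neighbours S)\<close>
  exactly when \<open>p \<notin> S\<close> and \<open>q \<in> neighbours S\<close>.\<close>

lemma H_edge_cut_neighbours:
  assumes SP: "S \<subseteq> P" and eH: "e \<in> edges K - {\<epsilon>1, \<epsilon>2}"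
  shows "int (card (endpts K e \<inter> S)) + of_bool (e \<in> cut K (S \<union> neighbours S)) =
    int (card (endpts K e \<inter> neighbours S))"
proof -
  let ?T = "neighbours S"
  obtain p q where pq: "p \<in> P" "q \<in> Q" "endpts K e = {p, q}" using eH by (rule H_edgeE)
  have pq': "p \<notin> ?T" "q \<notin> S" "p \<noteq> q" using pq neighbours_subset[of S] SP PQ by auto
  have card_ST: "card (endpts K e \<inter> (S \<union> ?T)) = of_bool (p \<in> S) + of_bool (q \<in> ?T)"
    using pq pq' by auto
  have "p \<in> S \<Longrightarrow> q \<in> ?T" using pq eH unfolding neighbours_def by auto
  moreover have "e \<in> cut K (S \<union> ?T) \<longleftrightarrow> (p \<in> S) \<noteq> (q \<in> ?T)"
    using eH card_ST unfolding cut_def by auto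
  ultimately show ?thesis using pq pq' by auto
qed

lemma card_cut_neighbours:
  assumes SP: "S \<subseteq> P"
  defines "T \<equiv> neighbours S" and "c1 \<equiv> card (endpts K \<epsilon>1 \<inter> S)"
    and "c2 \<equiv> card (endpts K \<epsilon>2 \<inter> neighbours S)"
  shows "int (card (cut K (S \<union> T))) = 3 * (int (card T) - int (card S))
      + int c1 + of_bool (c1 = 1) - int c2 + of_bool (c2 = 1)"
proof -
  have TQ: "T \<subseteq> Q" unfolding T_def by (rule neighbours_subset)
  define d where "d e = (if e = \<epsilon>1 then int c1 + of_bool (c1 = 1)
     else if e = \<epsilon>2 then - int c2 + of_bool (c2 = 1) else 0)" for e
  let ?ct = "\<lambda>e. of_bool (e \<in> cut K (S \<union> T)) :: int"
  have per_edge: "int (card (endpts K e \<inter> S)) + ?ct e = int (card (endpts K e \<inter> T)) + d e"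
    if e: "e \<in> edges K" for e
  proof -
    have "endpts K \<epsilon>1 \<inter> T = {}" "endpts K \<epsilon>1 \<inter> (S \<union> T) = endpts K \<epsilon>1 \<inter> S"
      "endpts K \<epsilon>2 \<inter> S = {}" "endpts K \<epsilon>2 \<inter> (S \<union> T) = endpts K \<epsilon>2 \<inter> T"
      using eP eQ SP TQ PQ by auto
    then show ?thesis
      using e eps H_edge_cut_neighbours[OF SP, of e] unfolding d_def c1_def c2_def T_def cut_def
      by (cases "e = \<epsilon>1 \<or> e = \<epsilon>2") auto
  qed
  have fE: "finite (edges K)" using wf by (rule wf_graphD)
  have SV: "S \<subseteq> verts K" "T \<subseteq> verts K" using SP TQ PQ by auto
  have "(\<Sum>e\<in>edges K. int (card (endpts K e \<inter> S)) + ?ct e) =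
      (\<Sum>e\<in>edges K. int (card (endpts K e \<inter> T)) + d e)"
    using per_edge by (rule sum.cong[OF refl])
  moreover have "(\<Sum>e\<in>edges K. int (card (endpts K e \<inter> Z))) = 3 * int (card Z)"
    if "Z \<subseteq> verts K" for Z
    using cubic_sum_card_endpts_Int[OF cub that] by (simp flip: of_nat_sum)
  moreover have "(\<Sum>e\<in>edges K. ?ct e) = int (card (cut K (S \<union> T)))"
    using fE cut_subset_edges[of K "S \<union> T"] by (simp add: Int_absorb1)
  moreover have "(\<Sum>e\<in>edges K. d e) = (\<Sum>e\<in>{\<epsilon>1, \<epsilon>2}. d e)"
    using fE eps by (intro sum.mono_neutral_right) (auto simp: d_def)
  ultimately show ?thesis using SV eps(3) unfolding d_def by (simp add: sum.distrib)
qed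

text \<open>3-edge-connectivity bounds the cut of \<open>S \<union> neighbours S\<close> from below.\<close>

lemma no_deficient_set:
  assumes SP: "S \<subseteq> P" and Sne: "S \<noteq> {}"
    and a: "a \<in> verts K" "a \<notin> S \<union> neighbours S"
    and small: "card (neighbours S) \<le> card S \<or> (card (endpts K \<epsilon>1 \<inter> S) = 0 \<and>
        card (neighbours S) \<le> card S + 1 \<and> card (endpts K \<epsilon>2 \<inter> neighbours S) = 2)"
  shows False
proof -
  have "S \<union> neighbours S \<subseteq> verts K" using SP neighbours_subset[of S] PQ by auto
  then have "3 \<le> card (cut K (S \<union> neighbours S))"
    by (rule k_connected_3_card_cut_ge_3[OF kc]) (use Sne a in auto)
  moreover note card_cut_neighbours[OF SP]
  moreover have "card (endpts K \<epsilon>1 \<inter> S) \<le> 2" "card (endpts K \<epsilon>2 \<inter> neighbours S) \<le> 2"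
    using card_endpts_Int_le_2[OF wf] eps by auto
  ultimately show False using small by (auto simp: of_bool_def split: if_splits)
qed

lemma hall_condition_avoiding_edge:
  assumes a: "a \<in> P" and b: "b \<in> Q" and S: "S \<subseteq> P - {a}"
  shows "card S \<le> card {r\<in>Q - {b}. \<exists>s\<in>S. \<exists>e\<in>edges K - {\<epsilon>1, \<epsilon>2}. endpts K e = {s, r}}"
    (is "_ \<le> card ?N")
proof (rule ccontr)
  assume "\<not> ?thesis"
  then have lt: "card ?N < card S" by simp
  have fN: "finite ?N" by (rule finite_subset[OF _ finite_PQ(2)]) auto
  moreover have "neighbours S \<subseteq> insert b ?N" unfolding neighbours_def by auto
  ultimately have "card (neighbours S) \<le> card (insert b ?N)" by (intro card_mono) simp_all
  also have "\<dots> \<le> card ?N + 1" using fN by (simp add: card_insert_if)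
  finally have "card (neighbours S) \<le> card S" using lt by simp
  moreover have "S \<noteq> {}" using lt by auto
  moreover have "a \<notin> S \<union> neighbours S" using S a PQ(1) unfolding neighbours_def by auto
  ultimately show False using no_deficient_set[of S a] S a PQ(2) by auto
qed

lemma hall_condition_avoiding_doubleton:
  assumes S: "S \<subseteq> P - endpts K \<epsilon>1"
  shows "card S \<le> card {r\<in>Q - endpts K \<epsilon>2. \<exists>s\<in>S. \<exists>e\<in>edges K - {\<epsilon>1, \<epsilon>2}. endpts K e = {s, r}}"
    (is "_ \<le> card ?N")
proof (rule ccontr)
  assume "\<not> ?thesis"
  then have lt: "card ?N < card S" by simp
  let ?E2 = "endpts K \<epsilon>2 \<inter> neighbours S"
  have "finite ?N" by (rule finite_subset[OF _ finite_PQ(2)]) auto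
  moreover have "finite ?E2" by (rule finite_subset[OF _ finite_PQ(2)]) (auto simp: neighbours_def)
  moreover have "neighbours S \<subseteq> ?N \<union> ?E2" unfolding neighbours_def by auto
  ultimately have "card (neighbours S) \<le> card (?N \<union> ?E2)" by (intro card_mono) simp_all
  also have "\<dots> \<le> card ?N + card ?E2" by (rule card_Un_le)
  finally have T: "card (neighbours S) + 1 \<le> card S + card ?E2" using lt by simp
  have "card ?E2 \<le> 2" by (rule card_endpts_Int_le_2[OF wf eps(2)])
  moreover have "endpts K \<epsilon>1 \<inter> S = {}" using S by blast
  then have "card (endpts K \<epsilon>1 \<inter> S) = 0" by simp
  ultimately have small: "card (neighbours S) \<le> card S \<or> (card (endpts K \<epsilon>1 \<inter> S) = 0 \<and>
      card (neighbours S) \<le> card S + 1 \<and> card ?E2 = 2)"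
    using T by linarith
  obtain u v where uv: "endpts K \<epsilon>1 = {u, v}" "u \<in> verts K"
    using wf_graph_endptsE[OF wf eps(1)] by blast
  have "u \<notin> S \<union> neighbours S" using uv S eP PQ(1) unfolding neighbours_def by auto
  moreover have "S \<noteq> {}" using lt by auto
  ultimately show False using no_deficient_set[OF _ _ uv(2) _ small] S by auto
qed

lemma perfect_matching_through_edge:
  assumes cPQ: "card P = card Q" and e: "e \<in> edges K - {\<epsilon>1, \<epsilon>2}"
  shows "\<exists>M. perfect_matching K M \<and> e \<in> M \<and> M \<subseteq> edges K - {\<epsilon>1, \<epsilon>2}"
proof -
  obtain a b where ab: "a \<in> P" "b \<in> Q" "endpts K e = {a, b}" using e by (rule H_edgeE)
  have fin: "finite P" "finite Q" using PQ(2) wf_graphD(1)[OF wf] by (metis finite_Un)+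
  have "\<exists>M. perfect_matching K M \<and> {e} \<subseteq> M \<and> M \<subseteq> (edges K - {\<epsilon>1, \<epsilon>2}) \<union> {e}"
  proof (rule perfect_matching_extend[OF wf PQ])
    show "card (P - {a}) = card (Q - {b})" using ab fin cPQ by simp
    show "matches_exactly K {e} ({a} \<union> {b})"
      using ab PQ(1) by (auto simp: matches_exactly_def)
  qed (use ab e hall_condition_avoiding_edge[OF ab(1,2)] in auto)
  then show ?thesis using e by auto
qed

lemma perfect_matching_through_doubleton:
  assumes cPQ: "card P = card Q"
  shows "\<exists>M. perfect_matching K M \<and> \<epsilon>1 \<in> M \<and> \<epsilon>2 \<in> M"
proof -
  have fin: "finite P" "finite Q" using PQ(2) wf_graphD(1)[OF wf] by (metis finite_Un)+
  have "card (endpts K \<epsilon>1) = 2" "card (endpts K \<epsilon>2) = 2" using wf_graphD(4)[OF wf] eps by auto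
  then have "card (P - endpts K \<epsilon>1) = card (Q - endpts K \<epsilon>2)"
    using card_Diff_subset[OF _ eP] card_Diff_subset[OF _ eQ] fin cPQ
      finite_subset[OF eP] finite_subset[OF eQ] by simp
  moreover have "endpts K \<epsilon>1 \<inter> endpts K \<epsilon>2 = {}" using eP eQ PQ(1) by blast
  then have "matches_exactly K {\<epsilon>1, \<epsilon>2} (endpts K \<epsilon>1 \<union> endpts K \<epsilon>2)"
    unfolding matches_exactly_def by blast
  ultimately have "\<exists>M. perfect_matching K M \<and> {\<epsilon>1, \<epsilon>2} \<subseteq> M \<and> M \<subseteq> (edges K - {\<epsilon>1, \<epsilon>2}) \<union> {\<epsilon>1, \<epsilon>2}"
    by (intro perfect_matching_extend[OF wf PQ _ eP eQ])
      (use eps hall_condition_avoiding_doubleton in auto)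
  then show ?thesis by auto
qed

lemma connected_H: "connected_graph H"
proof -
  obtain r where r: "r \<in> verts K"
    using kc by (metis card.empty ex_in_conv k_connected_def not_less_zero)
  define Y where "Y = {v \<in> verts K. (r, v) \<in> (adj_rel H)\<^sup>*}"
  have "cut K Y \<subseteq> {\<epsilon>1, \<epsilon>2}"
  proof
    fix e assume e: "e \<in> cut K Y"
    obtain y t where yt: "endpts K e = {y, t}" "y \<in> Y" "t \<notin> Y" "t \<in> verts K"
      by (rule cut_edgeE[OF wf e])
    show "e \<in> {\<epsilon>1, \<epsilon>2}"
    proof (rule ccontr)
      assume "e \<notin> {\<epsilon>1, \<epsilon>2}"
      then have "(y, t) \<in> adj_rel H" using e yt unfolding adj_rel_def cut_def by auto
      then show False using yt unfolding Y_def by (auto intro: rtrancl_into_rtrancl)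
    qed
  qed
  moreover have "Y \<subseteq> verts K" "r \<in> Y" unfolding Y_def using r by auto
  ultimately have "verts K \<subseteq> Y" using no_cut_within_two_edges[OF kc] by blast
  then show ?thesis by (intro connected_graphI[of r]) (use r Y_def in auto)
qed

text \<open>If \<open>K\<close> had a bipartition \<open>(P', Q')\<close>, no edge of \<open>H\<close> would leave \<open>(P \<inter> P') \<union> (Q \<inter> Q')\<close>,
  but \<open>\<epsilon>1\<close> would, contradicting 3-edge-connectivity.\<close>

lemma not_bipartite: "\<not> bipartite K"
proof
  assume "bipartite K"
  then obtain P' Q' where bip': "bipartition K P' Q'" unfolding bipartite_def by blast
  have P'Q': "P' \<inter> Q' = {}" using bip' by (simp add: bipartition_def)
  define Y where "Y = (P \<inter> P') \<union> (Q \<inter> Q')"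
  have ends': "\<exists>p'\<in>P'. \<exists>q'\<in>Q'. endpts K e = {p', q'}" if "e \<in> edges K" for e
    using bip' that unfolding bipartition_def by blast
  have "cut K Y \<subseteq> {\<epsilon>1, \<epsilon>2}"
  proof
    fix e assume e: "e \<in> cut K Y"
    show "e \<in> {\<epsilon>1, \<epsilon>2}"
    proof (rule ccontr)
      assume "e \<notin> {\<epsilon>1, \<epsilon>2}"
      then have eH: "e \<in> edges K - {\<epsilon>1, \<epsilon>2}" using e by (simp add: cut_def)
      then obtain p q where pq: "p \<in> P" "q \<in> Q" "endpts K e = {p, q}" by (rule H_edgeE)
      obtain p' q' where pq': "p' \<in> P'" "q' \<in> Q'" "endpts K e = {p', q'}" using ends' eH by blast
      have "p \<in> Y \<longleftrightarrow> q \<in> Y"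
        using pq pq' PQ(1) P'Q' unfolding Y_def doubleton_eq_iff by auto
      moreover have "p \<noteq> q" using pq PQ(1) by auto
      ultimately have "card (endpts K e \<inter> Y) \<noteq> 1" using pq(3) by auto
      then show False using e by (simp add: cut_def)
    qed
  qed
  moreover obtain p' q' where pq': "p' \<in> P'" "q' \<in> Q'" "endpts K \<epsilon>1 = {p', q'}"
    using ends' eps(1) by blast
  moreover have "p' \<in> Y" "q' \<notin> Y" "q' \<in> verts K" using pq' eP PQ P'Q' unfolding Y_def by auto
  ultimately show False using no_cut_within_two_edges[OF kc, of Y] PQ(2) unfolding Y_def by blast
qed

theorem near_bipartite:
  assumes "card P = card Q"
  shows "near_bipartite_rd K \<epsilon>1 \<epsilon>2"
proof -
  have V2: "card (verts K) \<ge> 2" using kc by (simp add: k_connected_def)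
  have "admissible H e" if "e \<in> edges H" for e
    using perfect_matching_through_edge[OF assms] perfect_matching_del_edges that
    unfolding admissible_def by (metis del_edges_simps(2))
  then have mcH: "matching_covered H"
    unfolding matching_covered_def using wf_graph_del_edges[OF wf] connected_H V2 by simp
  have "admissible K e" if "e \<in> edges K" for e
    using perfect_matching_through_edge[OF assms] perfect_matching_through_doubleton[OF assms] that
    unfolding admissible_def by (cases "e \<in> {\<epsilon>1, \<epsilon>2}") auto
  then have "matching_covered K"
    unfolding matching_covered_def using wf k_connected_3_connected[OF kc] V2 by simp
  moreover have "bipartite H" unfolding bipartite_def using bip by blast
  ultimately show ?thesis unfolding near_bipartite_rd_def using mcH not_bipartite eps by simp
qed

end

section \<open>3-cuts of a near-bipartite cubic graph\<close>

locale near_bipartite_3cut =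
  fixes G :: "('v, 'e) mgraph" and e1 e2 :: 'e and U W X :: "'v set"
  assumes conn3: "k_connected 3 G"
    and cub: "cubic G"
    and nb: "near_bipartite_rd G e1 e2"
    and bip: "bipartition (del_edges G {e1, e2}) U W"
    and e1U: "endpts G e1 \<subseteq> U"
    and XV: "X \<subseteq> verts G"
    and nontriv: "card X \<ge> 2" "card (verts G - X) \<ge> 2"
    and cut3: "card (cut G X) = 3"
begin

lemma wf: "wf_graph G"
  using cub by (rule cubic_wf_graph)

lemma UW: "U \<inter> W = {}" "U \<union> W = verts G"
  using bip by (auto simp: bipartition_def)

lemma finite_UWX: "finite U" "finite W" "finite X"
  using UW XV wf_graphD(1)[OF wf] by (metis finite_Un finite_subset)+

lemma e12: "e1 \<in> edges G" "e2 \<in> edges G" "e1 \<noteq> e2"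
  using nb by (auto simp: near_bipartite_rd_def)

lemma H_edgeE:
  assumes "e \<in> edges G" "e \<noteq> e1" "e \<noteq> e2"
  obtains u w where "u \<in> U" "w \<in> W" "endpts G e = {u, w}" "u \<notin> W" "w \<notin> U"
proof -
  obtain u w where "u \<in> U" "w \<in> W" "endpts G e = {u, w}"
    using assms bip unfolding bipartition_def del_edges_simps by blast
  then show ?thesis using that UW(1) by blast
qed

lemma odd_shores: "odd (card X)" "odd (card (verts G - X))"
  using cubic_odd_card_cut_iff[OF cub XV] cubic_odd_card_cut_iff[OF cub, of "verts G - X"]
    cut_Diff_verts[OF wf, of X] cut3 by auto

lemma contract_shores:
  "cubic (contract G X)" "k_connected 3 (contract G X)"
  "cubic (contract G (verts G - X))" "k_connected 3 (contract G (verts G - X))"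
proof -
  have c3: "card (cut G (verts G - X)) = 3" using cut_Diff_verts[OF wf, of X] cut3 by simp
  have "card X \<ge> 3" "card (verts G - X) \<ge> 3" using odd_shores nontriv by presburger+
  moreover have "verts G - (verts G - X) = X" using XV by auto
  ultimately show "cubic (contract G X)" "k_connected 3 (contract G X)"
    "cubic (contract G (verts G - X))" "k_connected 3 (contract G (verts G - X))"
    using cubic_contract[OF cub] k_connected_3_contract[OF conn3] nontriv cut3 c3 XV by auto
qed

text \<open>Every edge other than \<open>e1\<close>, \<open>e2\<close> has balance 0 and \<open>e1\<close> has balance 2, so summing over a
  perfect matching shows that \<open>e2\<close> lies in \<open>W\<close> and is used exactly when \<open>e1\<close> is.\<close>

definition balance :: "'e \<Rightarrow> int" where
  "balance e = int (card (endpts G e \<inter> U)) - int (card (endpts G e \<inter> W))"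

lemma balance_H: "e \<in> edges G \<Longrightarrow> e \<noteq> e1 \<Longrightarrow> e \<noteq> e2 \<Longrightarrow> balance e = 0"
  by (elim H_edgeE) (auto simp: balance_def)

lemma balance_e1: "balance e1 = 2"
proof -
  have "endpts G e1 \<inter> U = endpts G e1" "endpts G e1 \<inter> W = {}" using e1U UW by auto
  then show ?thesis unfolding balance_def using wf_graphD(4)[OF wf e12(1)] by simp
qed

lemma card_U_eq_card_W: "card U = card W"
proof -
  obtain v where v: "v \<in> verts G"
    using conn3 by (metis card.empty ex_in_conv k_connected_def not_less_zero)
  let ?Ev = "{e \<in> edges G. v \<in> endpts G e}"
  have "card ?Ev = 3" using cub v by (simp add: cubic_def degree_def)
  moreover have "card ?Ev - card {e1, e2} \<le> card (?Ev - {e1, e2})"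
    by (rule diff_card_le_card_Diff) simp
  moreover have "card {e1, e2} \<le> 2" by (simp add: card_insert_if)
  ultimately have "1 \<le> card (?Ev - {e1, e2})" by linarith
  then obtain e where "e \<in> ?Ev - {e1, e2}" by (metis card.empty ex_in_conv not_one_le_zero)
  then have "e \<in> edges (del_edges G {e1, e2})" by simp
  then obtain N where N: "perfect_matching (del_edges G {e1, e2}) N"
    using nb unfolding near_bipartite_rd_def matching_covered_def admissible_def by blast
  then have NG: "perfect_matching G N" and "N \<inter> {e1, e2} = {}"
    by (auto dest: perfect_matching_of_del_edges)
  then have "(\<Sum>e\<in>N. balance e) = 0"
    using balance_H by (intro sum.neutral) (auto simp: perfect_matching_def)
  moreover have "(\<Sum>e\<in>N. balance e) = int (card U) - int (card W)"
    unfolding balance_def by (rule perfect_matching_sum_card_diff[OF wf NG]) (use UW in auto)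
  ultimately show ?thesis by simp
qed

lemma perfect_matching_balance:
  assumes M: "perfect_matching G M"
  shows "(if e1 \<in> M then 2 else 0) + (if e2 \<in> M then balance e2 else 0) = 0"
proof -
  have fM: "finite M"
    using M wf_graphD(2)[OF wf] finite_subset unfolding perfect_matching_def by blast
  have "(\<Sum>e\<in>M. balance e) = int (card U) - int (card W)"
    unfolding balance_def by (rule perfect_matching_sum_card_diff[OF wf M]) (use UW in auto)
  then have "(\<Sum>e\<in>M. balance e) = 0" using card_U_eq_card_W by simp
  moreover have "(\<Sum>e\<in>M - {e1, e2}. balance e) = 0"
    using M balance_H by (intro sum.neutral) (auto simp: perfect_matching_def)
  ultimately have "(if e1 \<in> M then balance e1 else 0) + (if e2 \<in> M then balance e2 else 0) = 0"
    using sum_split_pair[OF fM e12(3), of balance] by simp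
  then show ?thesis using balance_e1 by (cases "e1 \<in> M") simp_all
qed

lemma e2W: "endpts G e2 \<subseteq> W"
proof -
  obtain M where M: "perfect_matching G M" "e1 \<in> M"
    using nb e12 unfolding near_bipartite_rd_def matching_covered_def admissible_def by blast
  then have "e2 \<in> M" "balance e2 = -2"
    using perfect_matching_balance[OF M(1)] by (auto split: if_splits)
  then have "card (endpts G e2 \<inter> W) = card (endpts G e2)"
    using card_endpts_Int_le_2[OF wf e12(2), of W] wf_graphD(4)[OF wf e12(2)]
    unfolding balance_def by linarith
  moreover have "finite (endpts G e2)"
    using wf_graphD(3)[OF wf e12(2)] wf_graphD(1)[OF wf] by (rule finite_subset)
  ultimately have "endpts G e2 \<inter> W = endpts G e2" using card_subset_eq Int_lower1 by blast
  then show ?thesis by blast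
qed

lemma perfect_matching_e1_iff_e2:
  assumes "perfect_matching G M"
  shows "e1 \<in> M \<longleftrightarrow> e2 \<in> M"
proof -
  have "endpts G e2 \<inter> W = endpts G e2" "endpts G e2 \<inter> U = {}" using e2W UW by auto
  then have "balance e2 = -2" unfolding balance_def using wf_graphD(4)[OF wf e12(2)] by simp
  then show ?thesis using perfect_matching_balance[OF assms] by (auto split: if_splits)
qed

text \<open>The same count relative to \<open>X\<close>: an edge other than \<open>e1\<close>, \<open>e2\<close> contributes \<open>+1\<close> if it
  goes from \<open>X \<inter> U\<close> to \<open>X\<^sup>c \<inter> W\<close>, \<open>-1\<close> if it goes from \<open>X \<inter> W\<close> to \<open>X\<^sup>c \<inter> U\<close>, and \<open>0\<close>
  otherwise.\<close>

definition balance_X :: "'e \<Rightarrow> int" where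
  "balance_X e = int (card (endpts G e \<inter> (X \<inter> U))) - int (card (endpts G e \<inter> (X \<inter> W)))"

definition ends_in_X :: "'e \<Rightarrow> nat" where
  "ends_in_X e = card (endpts G e \<inter> X)"

abbreviation cut_UW where "cut_UW \<equiv> edges_between G (X \<inter> U) ((verts G - X) \<inter> W)"
abbreviation cut_WU where "cut_WU \<equiv> edges_between G (X \<inter> W) ((verts G - X) \<inter> U)"

lemma cut_UW_iff:
  assumes "endpts G e = {u, w}" "u \<in> U" "w \<in> W"
  shows "e \<in> cut_UW \<longleftrightarrow> e \<in> edges G \<and> u \<in> X \<and> w \<notin> X"
proof
  assume "e \<in> cut_UW"
  then obtain y z where yz: "y \<in> X \<inter> U" "z \<in> (verts G - X) \<inter> W" "endpts G e = {y, z}"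
    unfolding edges_between_def by blast
  have "{u, w} = {y, z}" "y \<noteq> w" using yz assms UW by auto
  then have "y = u" "z = w" unfolding doubleton_eq_iff by auto
  then show "e \<in> edges G \<and> u \<in> X \<and> w \<notin> X" using yz \<open>e \<in> cut_UW\<close> by (auto simp: edges_between_def)
next
  assume "e \<in> edges G \<and> u \<in> X \<and> w \<notin> X"
  then show "e \<in> cut_UW" unfolding edges_between_def using assms UW by blast
qed

lemma cut_WU_iff:
  assumes "endpts G e = {u, w}" "u \<in> U" "w \<in> W"
  shows "e \<in> cut_WU \<longleftrightarrow> e \<in> edges G \<and> w \<in> X \<and> u \<notin> X"
proof
  assume "e \<in> cut_WU"
  then obtain y z where yz: "y \<in> X \<inter> W" "z \<in> (verts G - X) \<inter> U" "endpts G e = {y, z}"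
    unfolding edges_between_def by blast
  have "{u, w} = {y, z}" "y \<noteq> u" using yz assms UW by auto
  then have "y = w" "z = u" unfolding doubleton_eq_iff by auto
  then show "e \<in> edges G \<and> w \<in> X \<and> u \<notin> X" using yz \<open>e \<in> cut_WU\<close> by (auto simp: edges_between_def)
next
  assume "e \<in> edges G \<and> w \<in> X \<and> u \<notin> X"
  moreover have "endpts G e = {w, u}" using assms(1) by (simp add: insert_commute)
  ultimately show "e \<in> cut_WU" unfolding edges_between_def using assms UW by blast
qed

lemma cut_UW_WU_subset_H: "cut_UW \<subseteq> edges G - {e1, e2}" "cut_WU \<subseteq> edges G - {e1, e2}"
proof -
  have "\<not> endpts G e1 \<subseteq> {y, z}" if "y \<in> W \<or> z \<in> W" "endpts G e1 = {y, z}" for y z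
    using that e1U UW by auto
  moreover have "\<not> endpts G e2 \<subseteq> {y, z}" if "y \<in> U \<or> z \<in> U" "endpts G e2 = {y, z}" for y z
    using that e2W UW by auto
  ultimately show "cut_UW \<subseteq> edges G - {e1, e2}" "cut_WU \<subseteq> edges G - {e1, e2}"
    unfolding edges_between_def by auto
qed

lemma cut_UW_WU_disjoint: "cut_UW \<inter> cut_WU = {}"
proof (rule ccontr)
  assume "cut_UW \<inter> cut_WU \<noteq> {}"
  then obtain e where e: "e \<in> cut_UW" "e \<in> cut_WU" by blast
  then have eH: "e \<in> edges G" "e \<noteq> e1" "e \<noteq> e2" using cut_UW_WU_subset_H by auto
  obtain u w where "u \<in> U" "w \<in> W" "endpts G e = {u, w}" by (rule H_edgeE[OF eH])
  then show False using cut_UW_iff cut_WU_iff e by blast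
qed

lemma balance_X_H:
  assumes eH: "e \<in> edges G" "e \<noteq> e1" "e \<noteq> e2"
  shows "balance_X e = (if e \<in> cut_UW then 1 else 0) - (if e \<in> cut_WU then 1 else 0)"
proof -
  obtain u w where uw: "u \<in> U" "w \<in> W" "endpts G e = {u, w}" "u \<notin> W" "w \<notin> U"
    by (rule H_edgeE[OF eH])
  then have "u \<noteq> w" by auto
  then show ?thesis
    unfolding balance_X_def using cut_UW_iff[OF uw(3,1,2)] cut_WU_iff[OF uw(3,1,2)] uw eH(1)
    by (cases "u \<in> X"; cases "w \<in> X") (auto simp: Int_insert_left)
qed

lemma cut_X_H_iff:
  assumes eH: "e \<in> edges G" "e \<noteq> e1" "e \<noteq> e2"
  shows "e \<in> cut G X \<longleftrightarrow> e \<in> cut_UW \<or> e \<in> cut_WU"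
proof -
  obtain u w where uw: "u \<in> U" "w \<in> W" "endpts G e = {u, w}" "u \<notin> W" "w \<notin> U"
    by (rule H_edgeE[OF eH])
  then have "u \<noteq> w" by auto
  then show ?thesis
    unfolding cut_def using cut_UW_iff[OF uw(3,1,2)] cut_WU_iff[OF uw(3,1,2)] uw eH(1)
    by (cases "u \<in> X"; cases "w \<in> X") (auto simp: Int_insert_left)
qed

lemma balance_X_e1: "balance_X e1 = int (ends_in_X e1)"
proof -
  have "endpts G e1 \<inter> (X \<inter> U) = endpts G e1 \<inter> X" "endpts G e1 \<inter> (X \<inter> W) = {}"
    using e1U UW by auto
  then show ?thesis unfolding balance_X_def ends_in_X_def by simp
qed

lemma balance_X_e2: "balance_X e2 = - int (ends_in_X e2)"
proof -
  have "endpts G e2 \<inter> (X \<inter> W) = endpts G e2 \<inter> X" "endpts G e2 \<inter> (X \<inter> U) = {}"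
    using e2W UW by auto
  then show ?thesis unfolding balance_X_def ends_in_X_def by simp
qed

lemma in_cut_X_iff: "e \<in> edges G \<Longrightarrow> e \<in> cut G X \<longleftrightarrow> ends_in_X e = 1"
  unfolding cut_def ends_in_X_def by simp

lemma sum_balance_X:
  assumes B: "B \<subseteq> edges G"
  shows "(\<Sum>e\<in>B. balance_X e) =
    (if e1 \<in> B then int (ends_in_X e1) else 0) - (if e2 \<in> B then int (ends_in_X e2) else 0)
    + int (card (B \<inter> cut_UW)) - int (card (B \<inter> cut_WU))"
proof -
  have fB: "finite B" using B wf_graphD(2)[OF wf] by (rule finite_subset)
  have sub: "B \<inter> cut_UW \<subseteq> B - {e1, e2}" "B \<inter> cut_WU \<subseteq> B - {e1, e2}"
    using cut_UW_WU_subset_H by auto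
  have "(\<Sum>e\<in>B - {e1, e2}. balance_X e) =
      (\<Sum>e\<in>B - {e1, e2}. (if e \<in> B \<inter> cut_UW then 1 else 0) - (if e \<in> B \<inter> cut_WU then 1 else 0))"
    using B balance_X_H by (intro sum.cong) auto
  also have "\<dots> = int (card (B \<inter> cut_UW)) - int (card (B \<inter> cut_WU))"
    using fB sub by (simp only: sum_subtractf sum_indicator_card finite_Diff)
  finally show ?thesis
    using sum_split_pair[OF fB e12(3), of balance_X] balance_X_e1 balance_X_e2 by simp
qed

lemma card_Int_cut_X:
  assumes B: "B \<subseteq> edges G"
  shows "int (card (B \<inter> cut G X)) =
    (if e1 \<in> B \<and> ends_in_X e1 = 1 then 1 else 0) + (if e2 \<in> B \<and> ends_in_X e2 = 1 then 1 else 0)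
    + int (card (B \<inter> cut_UW)) + int (card (B \<inter> cut_WU))"
proof -
  have fB: "finite B" using B wf_graphD(2)[OF wf] by (rule finite_subset)
  have sub: "B \<inter> cut_UW \<subseteq> B - {e1, e2}" "B \<inter> cut_WU \<subseteq> B - {e1, e2}"
    using cut_UW_WU_subset_H by auto
  let ?i = "\<lambda>e. if e \<in> B \<inter> cut G X then 1 else 0 :: int"
  have "int (card (B \<inter> cut G X)) = (\<Sum>e\<in>B. ?i e)"
    using sum_indicator_card[OF fB, of "B \<inter> cut G X"] by simp
  also have "\<dots> = (if e1 \<in> B then ?i e1 else 0) + (if e2 \<in> B then ?i e2 else 0)
      + (\<Sum>e\<in>B - {e1, e2}. ?i e)"
    by (rule sum_split_pair[OF fB e12(3)])
  also have "(\<Sum>e\<in>B - {e1, e2}. ?i e) =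
      (\<Sum>e\<in>B - {e1, e2}. (if e \<in> B \<inter> cut_UW then 1 else 0) + (if e \<in> B \<inter> cut_WU then 1 else 0))"
    using B cut_X_H_iff cut_UW_WU_disjoint by (intro sum.cong) auto
  also have "\<dots> = int (card (B \<inter> cut_UW)) + int (card (B \<inter> cut_WU))"
    using fB sub by (simp only: sum.distrib sum_indicator_card finite_Diff)
  finally show ?thesis using in_cut_X_iff e12 by auto
qed

lemma shore_parts_subset: "X \<inter> U \<subseteq> verts G" "X \<inter> W \<subseteq> verts G"
  using XV by auto

lemma balance_count:
  "3 * int (card (X \<inter> U)) - 3 * int (card (X \<inter> W)) =
    int (ends_in_X e1) - int (ends_in_X e2) + int (card cut_UW) - int (card cut_WU)"
proof -
  have "(\<Sum>e\<in>edges G. balance_X e) = 3 * int (card (X \<inter> U)) - 3 * int (card (X \<inter> W))"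
    unfolding balance_X_def by (rule cubic_sum_card_diff[OF cub shore_parts_subset])
  moreover have "edges G \<inter> cut_UW = cut_UW" "edges G \<inter> cut_WU = cut_WU"
    using cut_UW_WU_subset_H by auto
  ultimately show ?thesis using sum_balance_X[of "edges G"] e12 by simp
qed

lemma cut_count:
  "3 = (if ends_in_X e1 = 1 then 1 else 0) + (if ends_in_X e2 = 1 then 1 else 0)
    + card cut_UW + card cut_WU"
proof -
  have "edges G \<inter> cut_UW = cut_UW" "edges G \<inter> cut_WU = cut_WU" "edges G \<inter> cut G X = cut G X"
    using cut_UW_WU_subset_H cut_subset_edges[of G X] by auto
  then have "int (card (cut G X)) =
      (if ends_in_X e1 = 1 then 1 else 0) + (if ends_in_X e2 = 1 then 1 else 0)
      + int (card cut_UW) + int (card cut_WU)"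
    using card_Int_cut_X[of "edges G"] e12 by simp
  then show ?thesis using cut3 by (simp split: if_splits)
qed

lemma ends_in_X_le_2: "ends_in_X e1 \<le> 2" "ends_in_X e2 \<le> 2"
  unfolding ends_in_X_def using card_endpts_Int_le_2[OF wf] e12 by auto

text \<open>By the two counts, \<open>3 (|X \<inter> U| - |X \<inter> W|) \<le> 5\<close>, and \<open>|X|\<close> is odd.\<close>

lemma card_X_U_eq_Suc:
  assumes "card (X \<inter> U) \<ge> card (X \<inter> W)"
  shows "card (X \<inter> U) = card (X \<inter> W) + 1"
proof -
  have "3 * int (card (X \<inter> U)) - 3 * int (card (X \<inter> W)) \<le> 5"
    using balance_count cut_count ends_in_X_le_2 by (simp split: if_splits)
  then have "3 * (card (X \<inter> U) - card (X \<inter> W)) \<le> 5" using assms by linarith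
  moreover have "X = (X \<inter> U) \<union> (X \<inter> W)" "(X \<inter> U) \<inter> (X \<inter> W) = {}" using XV UW by auto
  then have "card X = card (X \<inter> U) + card (X \<inter> W)"
    using finite_UWX(3) card_Un_disjoint[of "X \<inter> U" "X \<inter> W"] by (metis finite_Int)
  then have "odd (card (X \<inter> U) + card (X \<inter> W))" using odd_shores(1) by simp
  ultimately show ?thesis using assms by presburger
qed

text \<open>Summing \<open>balance_X\<close> over a perfect matching \<open>M\<close> gives \<open>|X \<inter> U| - |X \<inter> W| = 1\<close>.\<close>

lemma perfect_matching_counts:
  assumes ab: "card (X \<inter> U) = card (X \<inter> W) + 1" and M: "perfect_matching G M"
  shows "1 = (if e1 \<in> M then int (ends_in_X e1) - int (ends_in_X e2) else 0)
      + int (card (M \<inter> cut_UW)) - int (card (M \<inter> cut_WU))"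
    and "int (card (M \<inter> cut G X)) =
      (if e1 \<in> M \<and> ends_in_X e1 = 1 then 1 else 0) + (if e1 \<in> M \<and> ends_in_X e2 = 1 then 1 else 0)
      + int (card (M \<inter> cut_UW)) + int (card (M \<inter> cut_WU))"
    and "card (M \<inter> cut_UW) \<le> card cut_UW" "card (M \<inter> cut_WU) \<le> card cut_WU"
proof -
  have MB: "M \<subseteq> edges G" using M by (simp add: perfect_matching_def)
  have eq: "e2 \<in> M \<longleftrightarrow> e1 \<in> M" using perfect_matching_e1_iff_e2[OF M] by simp
  have "(\<Sum>e\<in>M. balance_X e) = int (card (X \<inter> U)) - int (card (X \<inter> W))"
    unfolding balance_X_def by (rule perfect_matching_sum_card_diff[OF wf M shore_parts_subset])
  then show "1 = (if e1 \<in> M then int (ends_in_X e1) - int (ends_in_X e2) else 0)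
      + int (card (M \<inter> cut_UW)) - int (card (M \<inter> cut_WU))"
    using sum_balance_X[OF MB] ab eq by (cases "e1 \<in> M") simp_all
  show "int (card (M \<inter> cut G X)) =
      (if e1 \<in> M \<and> ends_in_X e1 = 1 then 1 else 0) + (if e1 \<in> M \<and> ends_in_X e2 = 1 then 1 else 0)
      + int (card (M \<inter> cut_UW)) + int (card (M \<inter> cut_WU))"
    using card_Int_cut_X[OF MB] eq by simp
  have "finite cut_UW" "finite cut_WU"
    using cut_UW_WU_subset_H wf_graphD(2)[OF wf] by (meson finite_Diff finite_subset)+
  then show "card (M \<inter> cut_UW) \<le> card cut_UW" "card (M \<inter> cut_WU) \<le> card cut_WU"
    by (auto intro: card_mono)
qed

lemma tight_cut_unless_e1_in_e2_out:
  assumes ab: "card (X \<inter> U) = card (X \<inter> W) + 1"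
    and nd: "\<not> (ends_in_X e1 = 2 \<and> ends_in_X e2 = 0)"
  shows "tight_cut G X"
  unfolding tight_cut_def
proof (intro allI impI)
  fix M assume M: "perfect_matching G M"
  have "ends_in_X e1 \<in> {0, 1, 2}" "ends_in_X e2 \<in> {0, 1, 2}" using ends_in_X_le_2 by auto
  then have "int (card (M \<inter> cut G X)) = 1"
    using perfect_matching_counts[OF ab M] balance_count cut_count nd ab
    by (cases "e1 \<in> M") (auto split: if_splits)
  then show "card (M \<inter> cut G X) = 1" by simp
qed

lemma card_cut_UW_WU:
  assumes ab: "card (X \<inter> U) = card (X \<inter> W) + 1"
    and dd: "ends_in_X e1 = 2" "ends_in_X e2 = 0"
  shows "card cut_UW = 2" "card cut_WU = 1"
  using balance_count cut_count ab dd by (simp_all split: if_splits)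

lemma e1_subset_X_U:
  assumes "ends_in_X e1 = 2"
  shows "endpts G e1 \<subseteq> X \<inter> U"
proof -
  have "card (endpts G e1 \<inter> X) = card (endpts G e1)"
    using assms wf_graphD(4)[OF wf e12(1)] unfolding ends_in_X_def by simp
  moreover have "finite (endpts G e1)"
    using wf_graphD(3)[OF wf e12(1)] wf_graphD(1)[OF wf] by (rule finite_subset)
  ultimately have "endpts G e1 \<inter> X = endpts G e1" using card_subset_eq Int_lower1 by blast
  then show ?thesis using e1U by blast
qed

lemma e2_subset_compl_W:
  assumes "ends_in_X e2 = 0"
  shows "endpts G e2 \<subseteq> (verts G - X) \<inter> W"
proof -
  have "endpts G e2 \<inter> X = {}" using assms finite_UWX(3) unfolding ends_in_X_def by simp
  then show ?thesis using e2W wf_graphD(3)[OF wf e12(2)] by blast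
qed

lemma cut_WU_edgeE:
  assumes "f \<in> cut_WU"
  obtains z w where "endpts G f = {z, w}" "w \<in> X \<inter> W" "z \<in> (verts G - X) \<inter> U"
proof -
  obtain y z where yz: "y \<in> X \<inter> W" "z \<in> (verts G - X) \<inter> U" "endpts G f = {y, z}"
    using assms unfolding edges_between_def by blast
  then have "endpts G f = {z, y}" by (simp add: insert_commute)
  then show ?thesis using that yz by blast
qed

text \<open>A perfect matching of \<open>G - {e1, e2}\<close> through the unique edge of \<open>cut_WU\<close> crosses \<open>\<partial>(X)\<close>
  three times.\<close>

lemma not_tight_cut:
  assumes ab: "card (X \<inter> U) = card (X \<inter> W) + 1"
    and dd: "ends_in_X e1 = 2" "ends_in_X e2 = 0"
  shows "\<not> tight_cut G X"
proof -
  obtain f where f: "cut_WU = {f}" using card_cut_UW_WU(2)[OF ab dd] by (rule card_1_singletonE)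
  have "f \<in> edges (del_edges G {e1, e2})" using cut_UW_WU_subset_H f by auto
  then obtain N where N: "perfect_matching (del_edges G {e1, e2}) N" "f \<in> N"
    using nb unfolding near_bipartite_rd_def matching_covered_def admissible_def by blast
  then have NG: "perfect_matching G N" and "e1 \<notin> N"
    using perfect_matching_of_del_edges[OF N(1)] by auto
  moreover have "N \<inter> cut_WU = {f}" using f N(2) by auto
  ultimately have "card (N \<inter> cut G X) \<noteq> 1" using perfect_matching_counts[OF ab NG] by simp
  then show ?thesis unfolding tight_cut_def using NG by blast
qed

text \<open>A perfect matching containing \<open>e1\<close> but not the edge of \<open>cut_WU\<close> would have
  \<open>balance_X\<close>-sum at least 2.\<close>

lemma not_removable_cut_WU:
  assumes ab: "card (X \<inter> U) = card (X \<inter> W) + 1"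
    and dd: "ends_in_X e1 = 2" "ends_in_X e2 = 0" and f: "cut_WU = {f}"
  shows "\<not> removable G f"
proof
  assume "removable G f"
  then have mc: "matching_covered (del_edges G {f})" by (simp add: removable_def)
  have "f \<noteq> e1" using cut_UW_WU_subset_H f by auto
  then have "e1 \<in> edges (del_edges G {f})" using e12 by simp
  then obtain M where M: "perfect_matching (del_edges G {f}) M" "e1 \<in> M"
    using mc unfolding matching_covered_def admissible_def by blast
  then have MG: "perfect_matching G M" and "M \<inter> cut_WU = {}"
    using perfect_matching_of_del_edges[OF M(1)] f by auto
  then show False using perfect_matching_counts(1)[OF ab MG] M(2) dd by simp
qed

lemma bipartition_contract_compl:
  assumes f: "cut_WU \<subseteq> {f}" and e2: "endpts G e2 \<inter> X = {}"
  shows "bipartition (del_edges (contract G (verts G - X)) {e1, f})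
    (Some ` (X \<inter> U)) (insert None (Some ` (X \<inter> W)))"
  unfolding bipartition_def
proof (intro conjI ballI)
  let ?Y = "verts G - X"
  show "Some ` (X \<inter> U) \<inter> insert None (Some ` (X \<inter> W)) = {}" using UW by auto
  show "Some ` (X \<inter> U) \<union> insert None (Some ` (X \<inter> W)) = verts (del_edges (contract G ?Y) {e1, f})"
    using XV UW by auto
  fix e assume "e \<in> edges (del_edges (contract G ?Y) {e1, f})"
  then have eG: "e \<in> edges G" "\<not> endpts G e \<subseteq> ?Y" "e \<noteq> e1" "e \<noteq> f" by auto
  have "e \<noteq> e2" using eG(2) e2 wf_graphD(3)[OF wf e12(2)] by auto
  then obtain u w where uw: "u \<in> U" "w \<in> W" "endpts G e = {u, w}" by (rule H_edgeE[OF eG(1,3)])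
  have "u \<in> X"
  proof (rule ccontr)
    assume "u \<notin> X"
    then have "e \<in> cut_WU" using eG(1,2) uw UW(2) cut_WU_iff[OF uw(3,1,2)] by auto
    then show False using f eG(4) by auto
  qed
  then have "endpts (del_edges (contract G ?Y) {e1, f}) e = {Some u, contract_vertex ?Y w}"
    "Some u \<in> Some ` (X \<inter> U)" using uw by auto
  moreover have "contract_vertex ?Y w \<in> insert None (Some ` (X \<inter> W))"
    using uw UW(2) by (cases "w \<in> X") (auto simp: contract_vertex_def)
  ultimately show "\<exists>p\<in>Some ` (X \<inter> U). \<exists>q\<in>insert None (Some ` (X \<inter> W)).
      endpts (del_edges (contract G ?Y) {e1, f}) e = {p, q}"
    by blast
qed

lemma bipartition_contract:
  assumes f: "cut_WU \<subseteq> {f}" and e1: "endpts G e1 \<subseteq> X"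
  shows "bipartition (del_edges (contract G X) {f, e2})
    (insert None (Some ` ((verts G - X) \<inter> U))) (Some ` ((verts G - X) \<inter> W))"
  unfolding bipartition_def
proof (intro conjI ballI)
  show "insert None (Some ` ((verts G - X) \<inter> U)) \<inter> Some ` ((verts G - X) \<inter> W) = {}" using UW by auto
  show "insert None (Some ` ((verts G - X) \<inter> U)) \<union> Some ` ((verts G - X) \<inter> W) =
      verts (del_edges (contract G X) {f, e2})"
    using UW by auto
  fix e assume "e \<in> edges (del_edges (contract G X) {f, e2})"
  then have eG: "e \<in> edges G" "\<not> endpts G e \<subseteq> X" "e \<noteq> f" "e \<noteq> e2" by auto
  have "e \<noteq> e1" using eG(2) e1 by auto
  then obtain u w where uw: "u \<in> U" "w \<in> W" "endpts G e = {u, w}"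
    by (rule H_edgeE[OF eG(1) _ eG(4)])
  have "w \<notin> X"
  proof
    assume "w \<in> X"
    then have "e \<in> cut_WU" using eG(1,2) uw UW(2) cut_WU_iff[OF uw(3,1,2)] by auto
    then show False using f eG(3) by auto
  qed
  then have "endpts (del_edges (contract G X) {f, e2}) e = {contract_vertex X u, Some w}"
    "Some w \<in> Some ` ((verts G - X) \<inter> W)" using uw UW(2) by auto
  moreover have "contract_vertex X u \<in> insert None (Some ` ((verts G - X) \<inter> U))"
    using uw UW(2) by (cases "u \<in> X") auto
  ultimately show "\<exists>p\<in>insert None (Some ` ((verts G - X) \<inter> U)). \<exists>q\<in>Some ` ((verts G - X) \<inter> W).
      endpts (del_edges (contract G X) {f, e2}) e = {p, q}"
    by blast
qed

lemma near_bipartite_contract_compl: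
  assumes ab: "card (X \<inter> U) = card (X \<inter> W) + 1"
    and dd: "ends_in_X e1 = 2" "ends_in_X e2 = 0" and f: "cut_WU = {f}"
  shows "near_bipartite_rd (contract G (verts G - X)) e1 f"
proof -
  let ?K = "contract G (verts G - X)"
  let ?P = "Some ` (X \<inter> U)" and ?Q = "insert None (Some ` (X \<inter> W))"
  have "f \<in> cut_WU" using f by simp
  then obtain z w where zw: "endpts G f = {z, w}" "w \<in> X \<inter> W" "z \<in> (verts G - X) \<inter> U"
    by (rule cut_WU_edgeE)
  have fH: "f \<in> edges G" "f \<noteq> e1" using cut_UW_WU_subset_H f by auto
  have e1X: "endpts G e1 \<subseteq> X \<inter> U" by (rule e1_subset_X_U[OF dd(1)])
  have e2X: "endpts G e2 \<inter> X = {}" using e2_subset_compl_W[OF dd(2)] by auto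
  have cPQ: "card ?P = card ?Q" using ab finite_UWX(3) by (simp add: card_image)
  interpret K: doubleton_over_bipartite ?K e1 f ?P ?Q
  proof
    have "endpts G e1 \<noteq> {}" using wf_graphD(4)[OF wf e12(1)] by auto
    then show "e1 \<in> edges ?K" using e12 e1X by auto
    show "endpts ?K e1 \<subseteq> ?P" using e1X by (auto simp: contract_vertex_def)
  qed (use contract_shores(3,4) fH zw bipartition_contract_compl[OF _ e2X] f in auto)
  show ?thesis by (rule K.near_bipartite[OF cPQ])
qed

lemma near_bipartite_contract:
  assumes ab: "card (X \<inter> U) = card (X \<inter> W) + 1"
    and dd: "ends_in_X e1 = 2" "ends_in_X e2 = 0" and f: "cut_WU = {f}"
  shows "near_bipartite_rd (contract G X) e2 f"
proof -
  let ?K = "contract G X"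
  let ?P = "insert None (Some ` ((verts G - X) \<inter> U))" and ?Q = "Some ` ((verts G - X) \<inter> W)"
  have "f \<in> cut_WU" using f by simp
  then obtain z w where zw: "endpts G f = {z, w}" "w \<in> X \<inter> W" "z \<in> (verts G - X) \<inter> U"
    by (rule cut_WU_edgeE)
  have fH: "f \<in> edges G" "f \<noteq> e2" using cut_UW_WU_subset_H f by auto
  have e1X: "endpts G e1 \<subseteq> X" using e1_subset_X_U[OF dd(1)] by auto
  have e2X: "endpts G e2 \<subseteq> (verts G - X) \<inter> W" by (rule e2_subset_compl_W[OF dd(2)])
  have "(verts G - X) \<inter> U = U - X \<inter> U" "(verts G - X) \<inter> W = W - X \<inter> W" using UW by auto
  then have cPQ: "card ?P = card ?Q"
    using ab card_U_eq_card_W finite_UWX card_mono[OF finite_UWX(1), of "X \<inter> U"]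
    by (simp add: card_image card_Diff_subset)
  interpret K: doubleton_over_bipartite ?K f e2 ?P ?Q
  proof
    have "endpts G e2 \<noteq> {}" using wf_graphD(4)[OF wf e12(2)] by auto
    then show "e2 \<in> edges ?K" using e12 e2X by auto
    show "endpts ?K e2 \<subseteq> ?Q" using e2X by (auto simp: contract_vertex_def)
  qed (use contract_shores(1,2) fH zw bipartition_contract[OF _ e1X] f in auto)
  show ?thesis by (rule near_bipartite_rd_sym[OF K.near_bipartite[OF cPQ]])
qed

lemma good_cut_iff_ends_in_X:
  assumes ab: "card (X \<inter> U) = card (X \<inter> W) + 1"
  shows "good_cut G X \<longleftrightarrow> ends_in_X e1 = 2 \<and> ends_in_X e2 = 0"
proof
  assume good: "good_cut G X"
  show "ends_in_X e1 = 2 \<and> ends_in_X e2 = 0"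
  proof (rule ccontr)
    assume "\<not> ?thesis"
    then have "tight_cut G X" by (rule tight_cut_unless_e1_in_e2_out[OF ab])
    then show False using good by (simp add: good_cut_def)
  qed
next
  assume "ends_in_X e1 = 2 \<and> ends_in_X e2 = 0"
  then have dd: "ends_in_X e1 = 2" "ends_in_X e2 = 0" by auto
  obtain f where f: "cut_WU = {f}" using card_cut_UW_WU(2)[OF ab dd] by (rule card_1_singletonE)
  show "good_cut G X"
    using near_bipartite_contract[OF ab dd f] near_bipartite_contract_compl[OF ab dd f]
      not_tight_cut[OF ab dd]
    by (simp add: good_cut_def separating_cut_def near_bipartite_rd_def)
qed

lemma good_cut_iff:
  assumes ab: "card (X \<inter> U) = card (X \<inter> W) + 1"
  shows "good_cut G X \<longleftrightarrow>
    endpts G e1 \<subseteq> X \<inter> U \<and> endpts G e2 \<subseteq> (verts G - X) \<inter> W \<and> card cut_UW = 2 \<and>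
    (\<exists>f z w. cut_WU = {f} \<and> endpts G f = {z, w} \<and> w \<in> X \<inter> W)"
proof
  assume "good_cut G X"
  then have dd: "ends_in_X e1 = 2" "ends_in_X e2 = 0" using good_cut_iff_ends_in_X[OF ab] by auto
  obtain f where f: "cut_WU = {f}" using card_cut_UW_WU(2)[OF ab dd] by (rule card_1_singletonE)
  then have "f \<in> cut_WU" by simp
  then obtain z w where "endpts G f = {z, w}" "w \<in> X \<inter> W" by (rule cut_WU_edgeE)
  then show "endpts G e1 \<subseteq> X \<inter> U \<and> endpts G e2 \<subseteq> (verts G - X) \<inter> W \<and> card cut_UW = 2 \<and>
      (\<exists>f z w. cut_WU = {f} \<and> endpts G f = {z, w} \<and> w \<in> X \<inter> W)"
    using f e1_subset_X_U[OF dd(1)] e2_subset_compl_W[OF dd(2)] card_cut_UW_WU(1)[OF ab dd] by blast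
next
  assume "endpts G e1 \<subseteq> X \<inter> U \<and> endpts G e2 \<subseteq> (verts G - X) \<inter> W \<and> card cut_UW = 2 \<and>
      (\<exists>f z w. cut_WU = {f} \<and> endpts G f = {z, w} \<and> w \<in> X \<inter> W)"
  then have "endpts G e1 \<inter> X = endpts G e1" "endpts G e2 \<inter> X = {}" by auto
  then have "ends_in_X e1 = 2" "ends_in_X e2 = 0"
    unfolding ends_in_X_def using wf_graphD(4)[OF wf e12(1)] by simp_all
  then show "good_cut G X" using good_cut_iff_ends_in_X[OF ab] by simp
qed

lemma good_cut_doubletons:
  assumes ab: "card (X \<inter> U) = card (X \<inter> W) + 1" and good: "good_cut G X"
  shows "\<exists>f z w. cut_WU = {f} \<and> endpts G f = {z, w} \<and> w \<in> X \<inter> W \<and> \<not> removable G f \<and>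
    near_bipartite_rd (contract G (verts G - X)) e1 f \<and> near_bipartite_rd (contract G X) e2 f"
proof -
  have dd: "ends_in_X e1 = 2" "ends_in_X e2 = 0" using good good_cut_iff_ends_in_X[OF ab] by auto
  obtain f where f: "cut_WU = {f}" using card_cut_UW_WU(2)[OF ab dd] by (rule card_1_singletonE)
  then have "f \<in> cut_WU" by simp
  then obtain z w where "endpts G f = {z, w}" "w \<in> X \<inter> W" by (rule cut_WU_edgeE)
  then show ?thesis
    using f not_removable_cut_WU[OF ab dd f] near_bipartite_contract_compl[OF ab dd f]
      near_bipartite_contract[OF ab dd f] by blast
qed

end

theorem mainTheorem13:
  fixes G :: "('v, 'e) mgraph" and e1 e2 :: 'e and U W X :: "'v set"
  assumes conn3: "k_connected 3 G"
    and cub: "cubic G"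
    and nb: "near_bipartite_rd G e1 e2"
    and bip: "bipartition (del_edges G {e1, e2}) U W"
    and e1U: "endpts G e1 \<subseteq> U"
    and XV: "X \<subseteq> verts G"
    and nontriv: "card X \<ge> 2" "card (verts G - X) \<ge> 2"
    and cut3: "card (cut G X) = 3"
  shows "odd (card X) \<and>
    k_connected 3 (contract G X) \<and> cubic (contract G X) \<and>
    k_connected 3 (contract G (verts G - X)) \<and> cubic (contract G (verts G - X)) \<and>
    (card (X \<inter> U) \<ge> card (X \<inter> W) \<longrightarrow>
       card (X \<inter> U) = card (X \<inter> W) + 1 \<and>
       (good_cut G X \<longleftrightarrow>
          endpts G e1 \<subseteq> X \<inter> U \<and> endpts G e2 \<subseteq> (verts G - X) \<inter> W \<and>
          card (edges_between G (X \<inter> U) ((verts G - X) \<inter> W)) = 2 \<and>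
          (\<exists>f z w. edges_between G (X \<inter> W) ((verts G - X) \<inter> U) = {f} \<and>
                   endpts G f = {z, w} \<and> w \<in> X \<inter> W)) \<and>
       (good_cut G X \<longrightarrow>
          (\<exists>f z w. edges_between G (X \<inter> W) ((verts G - X) \<inter> U) = {f} \<and>
                   endpts G f = {z, w} \<and> w \<in> X \<inter> W \<and>
                   \<not> removable G f \<and>
                   near_bipartite_rd (contract G (verts G - X)) e1 f \<and>
                   near_bipartite_rd (contract G X) e2 f)))"
proof -
  interpret near_bipartite_3cut G e1 e2 U W X
    using assms by unfold_locales
  have "card (X \<inter> U) = card (X \<inter> W) + 1" if "card (X \<inter> U) \<ge> card (X \<inter> W)"
    using card_X_U_eq_Suc that by blast
  then show ?thesis
    using odd_shores(1) contract_shores good_cut_iff good_cut_doubletons by blast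
qed

end
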